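(* Let $\varphi:\mathfrak{h}\to V^*$ be a complex factorization structure of dimension $m$ and $j\in\{1,\ldots,m\}$. The factorization curve $\psi_j$ is decomposable if and only if there exist a subset $S\subset\{1,\ldots,m\}$ of cardinality $\deg\psi_j$, a 1-dimensional subspace $\Gamma_j\subset\bigotimes_{r\notin S}V_r^*$, and for each $r\in S$ an invertible projective transformation $g_r:\mathbb{P}(V_j^* )\to\mathbb{P}(V_r^* )$, such that for every $\ell\in\mathbb{P}(V_j)$ the line $\varphi(\psi_j(\ell))\subset V^*$ is spanned by the tensor having (a spanning vector of) $g_r\ell^0$ in the $r$-th slot for each $r\in S$ and (a spanning tensor of) $\Gamma_j$ in the remaining slots. In this case $j\in S$ and $g_j=\mathrm{id}$.
   Context: $V_1,\ldots,V_m$ are 2-dimensional complex vector spaces, $V^*=V_1^*\otimes\cdots\otimes V_m^*$; $\ell^0\subset V_j^*$ is the annihilator of $\ell\in\mathbb{P}(V_j)$; $\mathbb{P}(W)$ carries the Zariski topology and "generic" means on a nonempty Zariski-open subset. $\Sigma^0_{j,\ell}=V_1^*\otimes\cdots\otimes\ell^0\otimes\cdots\otimes V_m^*$ ($\ell^0$ in slot $j$). A factorization structure of dimension $m$ is an injective linear map $\varphi:\mathfrak{h}\to V^*$, $\dim\mathfrak{h}=m+1$, with $\dim(\varphi(\mathfrak{h})\cap\Sigma^0_{j,\ell})=1$ for all $j$ and generic $\ell$. The $j$-th factorization curve $\psi_j:\mathbb{P}(V_j)\to\mathbb{P}(\mathfrak{h})$ is the unique regular extension of the generically defined regular map $\ell\mapsto\varphi^{-1}(\varphi(\mathfrak{h})\cap\Sigma^0_{j,\ell})$;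 $\deg\psi_j$ is the integer $e$ with $\psi_j^*\mathcal{O}_{\mathfrak{h}}(1)\cong\mathcal{O}_{V_j}(e)$. Curves $\psi_i,\psi_j$ are equivalent if they have the same image; $\psi_j$ is decomposable if its equivalence class in $\{\psi_1,\ldots,\psi_m\}$ has exactly $\deg\psi_j$ elements. *)

theory Defs
  imports Complex_Main
begin

text \<open>Each V_r (r = 1..m) is identified with C^2 = bool => complex, and so is
 V_r^*; the pairing of alpha in V_r^* with v in V_r is alpha True * v True + alpha False * v False.
 A tensor in V^* = V_1^* (x) ... (x) V_m^* is a function on multi-indices (nat => bool) => complex
 (only slots 1..m matter).  The space h (dim m+1) is {x :: nat => complex. x i = 0 for i > m}.
 Points of a projective space are represented by nonzero vectors.\<close>

definition cline :: "('a \<Rightarrow> complex) \<Rightarrow> ('a \<Rightarrow> complex) set" where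
  "cline x = range (\<lambda>c. (\<lambda>i. c * x i))"

definition is_line :: "('a \<Rightarrow> complex) set \<Rightarrow> bool" where
  "is_line S \<longleftrightarrow> (\<exists>x. x \<noteq> (\<lambda>_. 0) \<and> S = cline x)"

definition clin_span :: "('a \<Rightarrow> complex) set \<Rightarrow> ('a \<Rightarrow> complex) set" where
  "clin_span A = {f. \<exists>(n::nat) c w. (\<forall>i<n. w i \<in> A) \<and> f = (\<lambda>x. \<Sum>i<n. c i * w i x)}"

definition pure_tensor :: "nat set \<Rightarrow> (nat \<Rightarrow> bool \<Rightarrow> complex) \<Rightarrow> (nat \<Rightarrow> bool) \<Rightarrow> complex" where
  "pure_tensor I a = (\<lambda>x. \<Prod>r\<in>I. a r (x r))"

definition tensor_space :: "nat set \<Rightarrow> ((nat \<Rightarrow> bool) \<Rightarrow> complex) set" where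
  "tensor_space I = clin_span {pure_tensor I a | a. True}"

definition ann :: "(bool \<Rightarrow> complex) \<Rightarrow> (bool \<Rightarrow> complex) set" where
  "ann v = {\<alpha>. \<alpha> True * v True + \<alpha> False * v False = 0}"

definition Sigma0 :: "nat \<Rightarrow> nat \<Rightarrow> (bool \<Rightarrow> complex) \<Rightarrow> ((nat \<Rightarrow> bool) \<Rightarrow> complex) set" where
  "Sigma0 m j v = clin_span {pure_tensor {1..m} a | a. a j \<in> ann v}"

definition hspace :: "nat \<Rightarrow> (nat \<Rightarrow> complex) set" where
  "hspace m = {x. \<forall>i. m < i \<longrightarrow> x i = 0}"

definition bform :: "nat \<Rightarrow> (nat \<Rightarrow> complex) \<Rightarrow> (bool \<Rightarrow> complex) \<Rightarrow> complex" where
  "bform d c v = (\<Sum>k\<le>d. c k * v True ^ k * v False ^ (d - k))"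

definition zariski_open_P1 :: "(bool \<Rightarrow> complex) set \<Rightarrow> bool" where
  "zariski_open_P1 U \<longleftrightarrow> (\<exists>F :: (nat \<times> (nat \<Rightarrow> complex)) set.
      U = {v. v \<noteq> (\<lambda>_. 0) \<and> \<not> (\<forall>(d, c)\<in>F. bform d c v = 0)})"

definition generic_P1 :: "((bool \<Rightarrow> complex) \<Rightarrow> bool) \<Rightarrow> bool" where
  "generic_P1 P \<longleftrightarrow> (\<exists>U. zariski_open_P1 U \<and> U \<noteq> {} \<and> (\<forall>v\<in>U. P v))"

definition factorization_structure ::
  "nat \<Rightarrow> ((nat \<Rightarrow> complex) \<Rightarrow> ((nat \<Rightarrow> bool) \<Rightarrow> complex)) \<Rightarrow> bool" where
  "factorization_structure m \<phi> \<longleftrightarrow>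
     (\<forall>x\<in>hspace m. \<forall>y\<in>hspace m. \<phi> (\<lambda>i. x i + y i) = (\<lambda>t. \<phi> x t + \<phi> y t)) \<and>
     (\<forall>x\<in>hspace m. \<forall>c. \<phi> (\<lambda>i. c * x i) = (\<lambda>t. c * \<phi> x t)) \<and>
     inj_on \<phi> (hspace m) \<and>
     \<phi> ` hspace m \<subseteq> tensor_space {1..m} \<and>
     (\<forall>j\<in>{1..m}. generic_P1 (\<lambda>v. is_line (\<phi> ` hspace m \<inter> Sigma0 m j v)))"

definition psi_of :: "nat \<Rightarrow> nat \<Rightarrow> (nat \<Rightarrow> nat \<Rightarrow> complex) \<Rightarrow> (bool \<Rightarrow> complex) \<Rightarrow> nat \<Rightarrow> complex" where
  "psi_of m e F v = (\<lambda>i. if i \<le> m then bform e (F i) v else 0)"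

text \<open>(e, F) represents the j-th factorization curve psi_j: the forms have no common zero
 (so psi_of is a regular map P^1 -> P(h) with psi^* O(1) = O(e)), and it agrees generically
 with l |-> phi^{-1}(phi(h) \<inter> Sigma^0_{j,l}).  Then deg psi_j = e.\<close>
definition fcurve :: "nat \<Rightarrow> ((nat \<Rightarrow> complex) \<Rightarrow> ((nat \<Rightarrow> bool) \<Rightarrow> complex)) \<Rightarrow> nat \<Rightarrow> nat
     \<Rightarrow> (nat \<Rightarrow> nat \<Rightarrow> complex) \<Rightarrow> bool" where
  "fcurve m \<phi> j e F \<longleftrightarrow>
     (\<forall>v. v \<noteq> (\<lambda>_. 0) \<longrightarrow> (\<exists>i\<le>m. bform e (F i) v \<noteq> 0)) \<and>
     generic_P1 (\<lambda>v. {x \<in> hspace m. \<phi> x \<in> Sigma0 m j v} = cline (psi_of m e F v))"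

definition curve_image :: "nat \<Rightarrow> nat \<Rightarrow> (nat \<Rightarrow> nat \<Rightarrow> complex) \<Rightarrow> (nat \<Rightarrow> complex) set set" where
  "curve_image m e F = {cline (psi_of m e F v) | v. v \<noteq> (\<lambda>_. 0)}"

text \<open>psi_j decomposable: its equivalence class (same image) among psi_1..psi_m has deg psi_j elements\<close>
definition decomposable :: "nat \<Rightarrow> (nat \<Rightarrow> nat) \<Rightarrow> (nat \<Rightarrow> nat \<Rightarrow> nat \<Rightarrow> complex) \<Rightarrow> nat \<Rightarrow> bool" where
  "decomposable m e F j \<longleftrightarrow>
     card {i \<in> {1..m}. curve_image m (e i) (F i) = curve_image m (e j) (F j)} = e j"

definition app2 :: "(bool \<Rightarrow> bool \<Rightarrow> complex) \<Rightarrow> (bool \<Rightarrow> complex) \<Rightarrow> bool \<Rightarrow> complex" where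
  "app2 M \<alpha> = (\<lambda>b. M b True * \<alpha> True + M b False * \<alpha> False)"

definition invertible2 :: "(bool \<Rightarrow> bool \<Rightarrow> complex) \<Rightarrow> bool" where
  "invertible2 M \<longleftrightarrow> (\<exists>N. \<forall>\<alpha>. app2 N (app2 M \<alpha>) = \<alpha> \<and> app2 M (app2 N \<alpha>) = \<alpha>)"

definition proj_identity :: "(bool \<Rightarrow> bool \<Rightarrow> complex) \<Rightarrow> bool" where
  "proj_identity M \<longleftrightarrow> (\<exists>c. c \<noteq> 0 \<and> (\<forall>\<alpha>. app2 M \<alpha> = (\<lambda>b. c * \<alpha> b)))"

text \<open>the data (S, g_r = [M r], Gamma_j = span gamma) of the decomposition statement\<close>
definition decomposition_data ::
  "nat \<Rightarrow> ((nat \<Rightarrow> complex) \<Rightarrow> ((nat \<Rightarrow> bool) \<Rightarrow> complex)) \<Rightarrow> (nat \<Rightarrow> nat) \<Rightarrow> (nat \<Rightarrow> nat \<Rightarrow> nat \<Rightarrow> complex)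
   \<Rightarrow> nat \<Rightarrow> nat set \<Rightarrow> (nat \<Rightarrow> bool \<Rightarrow> bool \<Rightarrow> complex) \<Rightarrow> ((nat \<Rightarrow> bool) \<Rightarrow> complex) \<Rightarrow> bool" where
  "decomposition_data m \<phi> e F j S M \<gamma> \<longleftrightarrow>
     S \<subseteq> {1..m} \<and> card S = e j \<and>
     \<gamma> \<noteq> (\<lambda>_. 0) \<and> \<gamma> \<in> tensor_space ({1..m} - S) \<and>
     (\<forall>r\<in>S. invertible2 (M r)) \<and>
     (\<forall>v \<alpha>. v \<noteq> (\<lambda>_. 0) \<longrightarrow> \<alpha> \<noteq> (\<lambda>_. 0) \<longrightarrow> \<alpha> \<in> ann v \<longrightarrow>
        cline (\<phi> (psi_of m (e j) (F j) v)) =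
        cline (\<lambda>x. \<gamma> x * (\<Prod>r\<in>S. app2 (M r) \<alpha> (x r))))"

end

theory Submission
  imports Defs "HOL-Computational_Algebra.Polynomial_Factorial" "HOL-Computational_Algebra.Field_as_Ring"
begin

text \<open>
  The entries of \<open>\<phi>(\<psi>\<^sub>j(\<ell>))\<close> are binary forms of degree \<open>e = deg \<psi>\<^sub>j\<close> in \<open>\<ell>\<close>. If \<open>\<psi>\<^sub>r\<close> has the same
  image as \<open>\<psi>\<^sub>j\<close>, then every \<open>\<ell>\<close> is paired with a point \<open>u\<close> such that \<open>\<phi>(\<psi>\<^sub>j(\<ell>)) \<in> \<Sigma>\<^sup>0\<^sub>r\<^sub>,\<^sub>u\<close>, and
  vice versa; hence the two halves of slot \<open>r\<close> of the family are proportional, with a nonconstant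
  coprime ratio, i.e. the family has a linear factor in \<open>\<ell>\<close> attached to slot \<open>r\<close>. When the class
  \<open>S\<close> of \<open>\<psi>\<^sub>j\<close> has \<open>e\<close> elements these factors exhaust the degree, so what remains is a constant tensor
  \<open>\<Gamma>\<^sub>j\<close> on the other slots, and the linear factors are the transformations \<open>g\<^sub>r\<close>.

  Conversely, a decomposition puts \<open>\<phi>(\<psi>\<^sub>j(\<ell>))\<close> into \<open>\<Sigma>\<^sup>0\<close> of slot \<open>r \<in> S\<close> at the point \<open>g\<^sub>r(\<ell>)\<close>, so
  \<open>\<psi>\<^sub>j\<close> and \<open>\<psi>\<^sub>r \<circ> g\<^sub>r\<close> agree on a Zariski open set and therefore everywhere; for \<open>r \<notin> S\<close> a common
  image would force \<open>\<Gamma>\<^sub>j = 0\<close>. So the class of \<open>\<psi>\<^sub>j\<close> is exactly \<open>S\<close>, and since \<open>\<phi>(\<psi>\<^sub>j(\<ell>))\<close> lies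
  in \<open>\<Sigma>\<^sup>0\<^sub>j\<^sub>,\<^sub>\<ell>\<close>, the transformation \<open>g\<^sub>j\<close> fixes every point.
\<close>

section \<open>Binary forms as homogenized polynomials\<close>

definition homog :: "nat \<Rightarrow> complex poly \<Rightarrow> (bool \<Rightarrow> complex) \<Rightarrow> complex" where
  "homog N p v = bform N (coeff p) v"

lemma homog_add: "homog N (p + q) v = homog N p v + homog N q v"
  by (simp add: homog_def bform_def algebra_simps sum.distrib)

lemma homog_smult: "homog N (smult a p) v = a * homog N p v"
  by (simp add: homog_def bform_def sum_distrib_left algebra_simps)

lemma homog_diff: "homog N (p - q) v = homog N p v - homog N q v"
  by (simp add: homog_def bform_def algebra_simps sum_subtractf)

lemma homog_0 [simp]: "homog N 0 v = 0"
  by (simp add: homog_def bform_def)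

lemma homog_sum: "finite A \<Longrightarrow> homog N (\<Sum>i\<in>A. f i) v = (\<Sum>i\<in>A. homog N (f i) v)"
  by (induction A rule: finite_induct) (simp_all add: homog_add)

lemma homog_degree_0: "homog 0 p v = coeff p 0"
  by (simp add: homog_def bform_def)

lemma homog_degree_1: "homog (Suc 0) p v = coeff p 0 * v False + coeff p 1 * v True"
  by (simp add: homog_def bform_def)

lemma homog_dehomogenize:
  assumes "degree p \<le> N" "v False \<noteq> 0"
  shows "homog N p v = v False ^ N * poly p (v True / v False)"
proof -
  have "poly p (v True / v False) = (\<Sum>i\<le>N. coeff p i * (v True / v False) ^ i)"
    unfolding poly_altdef
    by (rule sum.mono_neutral_left) (use assms le_degree in auto)
  then have "v False ^ N * poly p (v True / v False) =
      (\<Sum>i\<le>N. coeff p i * v True ^ i * (v False ^ N / v False ^ i))"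
    by (simp add: sum_distrib_left power_divide algebra_simps)
  also have "\<dots> = (\<Sum>i\<le>N. coeff p i * v True ^ i * v False ^ (N - i))"
    by (rule sum.cong) (use assms in \<open>auto simp: power_diff\<close>)
  finally show ?thesis by (simp add: homog_def bform_def)
qed

definition affine_point :: "complex \<Rightarrow> bool \<Rightarrow> complex" where
  "affine_point t = (\<lambda>b. if b then t else 1)"

lemma affine_point_nonzero: "affine_point t \<noteq> (\<lambda>_. 0)"
  by (metis affine_point_def one_neq_zero)

lemma homog_affine_point:
  assumes "degree p \<le> N"
  shows "homog N p (affine_point t) = poly p t"
  using homog_dehomogenize[OF assms, of "affine_point t"] by (simp add: affine_point_def)

lemma homog_at_infinity:
  assumes "v False = 0"
  shows "homog N p v = coeff p N * v True ^ N"
proof -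
  have "homog N p v = (\<Sum>k\<le>N. if k = N then coeff p N * v True ^ N else 0)"
    unfolding homog_def bform_def by (rule sum.cong) (use assms in auto)
  then show ?thesis by simp
qed

lemma homog_mult:
  assumes "degree p \<le> N1" "degree q \<le> N2"
  shows "homog (N1 + N2) (p * q) v = homog N1 p v * homog N2 q v"
proof (cases "v False = 0")
  case True
  have "coeff (p * q) (N1 + N2) = coeff p N1 * coeff q N2"
  proof (cases "degree p = N1 \<and> degree q = N2")
    case True then show ?thesis using coeff_mult_degree_sum[of p q] by simp
  next
    case False
    then have "degree p < N1 \<or> degree q < N2" using assms by auto
    then show ?thesis using assms degree_mult_le[of p q] by (auto simp: coeff_eq_0)
  qed
  then show ?thesis using True by (simp add: homog_at_infinity power_add)
next
  case False
  have "degree (p * q) \<le> N1 + N2" using assms degree_mult_le[of p q] by linarith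
  then show ?thesis using False assms by (simp add: homog_dehomogenize power_add)
qed

lemma homog_prod_linear:
  assumes "finite S" "\<forall>r\<in>S. degree (f r) \<le> 1" "degree g = 0"
  shows "homog (card S) ((\<Prod>r\<in>S. f r) * g) v = (\<Prod>r\<in>S. homog 1 (f r) v) * coeff g 0"
  using assms
proof (induction S rule: finite_induct)
  case empty then show ?case by (simp add: homog_degree_0)
next
  case (insert a A)
  have "degree (\<Prod>r\<in>A. f r) \<le> (\<Sum>r\<in>A. 1)"
    using degree_prod_sum_le[OF insert.hyps(1), of f] sum_mono[of A "\<lambda>r. degree (f r)" "\<lambda>_. 1"]
      insert.prems by (simp add: o_def)
  then have "degree ((\<Prod>r\<in>A. f r) * g) \<le> card A"
    using degree_mult_le[of "\<Prod>r\<in>A. f r" g] insert.prems by simp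
  then have "homog (1 + card A) (f a * ((\<Prod>r\<in>A. f r) * g)) v =
      homog 1 (f a) v * homog (card A) ((\<Prod>r\<in>A. f r) * g) v"
    by (intro homog_mult) (use insert.prems in auto)
  then show ?case using insert by (simp add: algebra_simps)
qed

lemma homog_eq_0_iff:
  assumes "degree p \<le> N"
  shows "(\<forall>v. homog N p v = 0) \<longleftrightarrow> p = 0"
  using homog_affine_point[OF assms] poly_all_0_iff_0 by (metis homog_0)

definition poly_of_coeffs :: "nat \<Rightarrow> (nat \<Rightarrow> complex) \<Rightarrow> complex poly" where
  "poly_of_coeffs N c = (\<Sum>k\<le>N. monom (c k) k)"

lemma coeff_poly_of_coeffs: "coeff (poly_of_coeffs N c) i = (if i \<le> N then c i else 0)"
  by (simp add: poly_of_coeffs_def coeff_sum)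

lemma degree_poly_of_coeffs: "degree (poly_of_coeffs N c) \<le> N"
  by (rule degree_le) (simp add: coeff_poly_of_coeffs)

lemma homog_poly_of_coeffs: "homog N (poly_of_coeffs N c) v = bform N c v"
  by (simp add: homog_def bform_def coeff_poly_of_coeffs)

lemma poly_eq_0_of_homog_vanishing:
  assumes "degree G \<le> N" "degree F0 \<le> N'" "F0 \<noteq> 0"
    and "\<And>v. v \<noteq> (\<lambda>_. 0) \<Longrightarrow> homog N' F0 v \<noteq> 0 \<Longrightarrow> homog N G v = 0"
  shows "G = 0"
proof -
  have "poly (G * F0) t = 0" for t
    using assms(4)[OF affine_point_nonzero, of t] assms(1,2)
    by (auto simp: homog_affine_point)
  then have "G * F0 = 0" using poly_all_0_iff_0 by blast
  then show ?thesis using assms(3) by simp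
qed

lemma zariski_open_P1_contains_nonvanishing_locus:
  assumes "zariski_open_P1 U" "U \<noteq> {}"
  obtains F0 N' where "F0 \<noteq> 0" "degree F0 \<le> N'"
    "\<And>u. u \<noteq> (\<lambda>_. 0) \<Longrightarrow> homog N' F0 u \<noteq> 0 \<Longrightarrow> u \<in> U"
proof -
  obtain FF where U: "U = {v. v \<noteq> (\<lambda>_. 0) \<and> \<not> (\<forall>(d, c)\<in>FF. bform d c v = 0)}"
    using assms(1) unfolding zariski_open_P1_def by blast
  obtain u0 where "u0 \<in> U" using assms(2) by blast
  then obtain d0 c0 where dc: "(d0, c0) \<in> FF" "bform d0 c0 u0 \<noteq> 0" using U by auto
  have "poly_of_coeffs d0 c0 \<noteq> 0" using dc(2) homog_poly_of_coeffs[of d0 c0 u0] by auto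
  moreover have "u \<in> U" if "u \<noteq> (\<lambda>_. 0)" "homog d0 (poly_of_coeffs d0 c0) u \<noteq> 0" for u
    using U dc(1) that homog_poly_of_coeffs by fastforce
  ultimately show ?thesis using that degree_poly_of_coeffs by blast
qed

lemma poly_eq_0_of_homog_vanishing_on_open:
  assumes "zariski_open_P1 U" "U \<noteq> {}" "degree G \<le> N" "\<forall>v\<in>U. homog N G v = 0"
  shows "G = 0"
proof -
  obtain F0 N' where "F0 \<noteq> 0" "degree F0 \<le> N'"
    "\<And>u. u \<noteq> (\<lambda>_. 0) \<Longrightarrow> homog N' F0 u \<noteq> 0 \<Longrightarrow> u \<in> U"
    using zariski_open_P1_contains_nonvanishing_locus[OF assms(1,2)] by blast
  then show ?thesis
    using poly_eq_0_of_homog_vanishing[OF assms(3)] assms(4) by blast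
qed

definition is_form :: "nat \<Rightarrow> ((bool \<Rightarrow> complex) \<Rightarrow> complex) \<Rightarrow> bool" where
  "is_form N f \<longleftrightarrow> (\<exists>q. degree q \<le> N \<and> (\<forall>v. f v = homog N q v))"

lemma is_form_mult:
  assumes "is_form N1 f" "is_form N2 g" shows "is_form (N1 + N2) (\<lambda>v. f v * g v)"
proof -
  obtain p where p: "degree p \<le> N1" "\<forall>v. f v = homog N1 p v" using assms(1) unfolding is_form_def by blast
  obtain q where q: "degree q \<le> N2" "\<forall>v. g v = homog N2 q v" using assms(2) unfolding is_form_def by blast
  have "degree (p * q) \<le> N1 + N2" using degree_mult_le[of p q] p(1) q(1) by linarith
  then show ?thesis unfolding is_form_def using p q homog_mult by auto
qed

lemma is_form_add:
  assumes "is_form N f" "is_form N g" shows "is_form N (\<lambda>v. f v + g v)"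
proof -
  obtain p where p: "degree p \<le> N" "\<forall>v. f v = homog N p v" using assms(1) unfolding is_form_def by blast
  obtain q where q: "degree q \<le> N" "\<forall>v. g v = homog N q v" using assms(2) unfolding is_form_def by blast
  have "degree (p + q) \<le> N" using degree_add_le p(1) q(1) by blast
  then show ?thesis unfolding is_form_def using p q homog_add by auto
qed

lemma is_form_scale: "is_form N f \<Longrightarrow> is_form N (\<lambda>v. c * f v)"
  unfolding is_form_def by (metis degree_smult_le homog_smult order.trans)

lemma is_form_const: "is_form 0 (\<lambda>v. c)"
  unfolding is_form_def by (rule exI[where x="[:c:]"]) (simp add: homog_degree_0)

lemma is_form_linear: "is_form 1 (\<lambda>v. a * v True + b * v False)"
  unfolding is_form_def by (rule exI[where x="[:b, a:]"]) (simp add: homog_degree_1 algebra_simps)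

lemma is_form_power: "is_form 1 f \<Longrightarrow> is_form k (\<lambda>v. f v ^ k)"
proof (induction k)
  case 0 then show ?case using is_form_const[of 1] by simp
next
  case (Suc k)
  show ?case using is_form_mult[OF Suc.prems Suc.IH[OF Suc.prems]] by simp
qed

lemma is_form_sum: "finite A \<Longrightarrow> \<forall>i\<in>A. is_form N (f i) \<Longrightarrow> is_form N (\<lambda>v. \<Sum>i\<in>A. f i v)"
proof (induction A rule: finite_induct)
  case empty
  show ?case unfolding is_form_def by (intro exI[of _ 0]) simp
next
  case (insert a A)
  then show ?case using is_form_add[of N "f a" "\<lambda>v. \<Sum>i\<in>A. f i v"] by simp
qed

lemma homog_comp_app2:
  assumes "degree p \<le> N"
  shows "\<exists>q. degree q \<le> N \<and> (\<forall>v. homog N p (app2 A v) = homog N q v)"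
proof -
  have linear: "is_form 1 (\<lambda>v. app2 A v b)" for b
    unfolding app2_def by (rule is_form_linear)
  have "is_form N (\<lambda>v. \<Sum>k\<le>N. coeff p k * (app2 A v True ^ k * app2 A v False ^ (N - k)))"
  proof (intro is_form_sum ballI is_form_scale)
    fix k assume "k \<in> {..N}"
    have "is_form (k + (N - k)) (\<lambda>v. app2 A v True ^ k * app2 A v False ^ (N - k))"
      by (rule is_form_mult[OF is_form_power[OF linear] is_form_power[OF linear]])
    then show "is_form N (\<lambda>v. app2 A v True ^ k * app2 A v False ^ (N - k))"
      using \<open>k \<in> {..N}\<close> by simp
  qed simp
  then show ?thesis unfolding is_form_def homog_def bform_def by (simp add: algebra_simps)
qed

lemma homog_minors_vanish:
  fixes P Q :: "nat \<Rightarrow> complex poly"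
  assumes deg: "\<And>i. degree (P i) \<le> N1" "\<And>i. degree (Q i) \<le> N2" and F0: "F0 \<noteq> 0" "degree F0 \<le> N'"
    and proportional: "\<And>v. v \<noteq> (\<lambda>_. 0) \<Longrightarrow> homog N' F0 v \<noteq> 0 \<Longrightarrow>
      \<exists>c. \<forall>i. homog N1 (P i) v = c * homog N2 (Q i) v"
  shows "homog N1 (P i) v * homog N2 (Q k) v = homog N1 (P k) v * homog N2 (Q i) v"
proof -
  define G where "G = P i * Q k - P k * Q i"
  have "degree (P i * Q k) \<le> N1 + N2" "degree (P k * Q i) \<le> N1 + N2"
    using degree_mult_le[of "P i" "Q k"] degree_mult_le[of "P k" "Q i"] deg[of i] deg[of k] by linarith+
  then have dG: "degree G \<le> N1 + N2" unfolding G_def by (rule degree_diff_le)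
  have homG: "homog (N1 + N2) G w =
      homog N1 (P i) w * homog N2 (Q k) w - homog N1 (P k) w * homog N2 (Q i) w" for w
    unfolding G_def homog_diff by (simp add: homog_mult deg)
  have "G = 0"
  proof (rule poly_eq_0_of_homog_vanishing[OF dG F0(2,1)])
    fix w :: "bool \<Rightarrow> complex" assume "w \<noteq> (\<lambda>_. 0)" "homog N' F0 w \<noteq> 0"
    then obtain c where "\<forall>i. homog N1 (P i) w = c * homog N2 (Q i) w" using proportional by blast
    then show "homog (N1 + N2) G w = 0" unfolding homG by simp
  qed
  then show ?thesis using homG[of v] by simp
qed

section \<open>Tensors as functions of multi-indices\<close>

definition depends_on :: "nat set \<Rightarrow> ((nat \<Rightarrow> bool) \<Rightarrow> complex) \<Rightarrow> bool" where
  "depends_on I t \<longleftrightarrow> (\<forall>x y. (\<forall>i\<in>I. x i = y i) \<longrightarrow> t x = t y)"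

lemma depends_on_pure_tensor: "depends_on I (pure_tensor I a)"
  unfolding depends_on_def pure_tensor_def by (intro allI impI prod.cong refl) auto

lemma clin_spanE:
  assumes "f \<in> clin_span A"
  obtains n :: nat and w c where "\<forall>i<n. w i \<in> A" "\<And>x. f x = (\<Sum>i<n. c i * w i x)"
proof -
  obtain n :: nat and w c where "\<forall>i<n. w i \<in> A" "f = (\<lambda>x. \<Sum>i<n. c i * w i x)"
    using assms unfolding clin_span_def by blast
  then show ?thesis by (intro that) auto
qed

lemma clin_span_sum:
  assumes "\<forall>i<n. w i \<in> A"
  shows "(\<lambda>x. \<Sum>i<(n::nat). c i * w i x) \<in> clin_span A"
  unfolding clin_span_def using assms by blast

lemma depends_on_tensor_space:
  assumes "t \<in> tensor_space I" shows "depends_on I t"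
proof -
  obtain n :: nat and w c where w: "\<forall>i<n. w i \<in> {pure_tensor I a | a. True}"
    and t: "\<And>x. t x = (\<Sum>i<n. c i * w i x)"
    using assms unfolding tensor_space_def by (elim clin_spanE) (rule that)
  have "depends_on I (w i)" if "i < n" for i
  proof -
    obtain a where "w i = pure_tensor I a" using w \<open>i < n\<close> by blast
    then show ?thesis using depends_on_pure_tensor by simp
  qed
  then show ?thesis unfolding depends_on_def t by (auto intro!: sum.cong)
qed

text \<open>Expansion in the basis of delta tensors, one for each subset of \<open>I\<close>.\<close>
lemma depends_on_imp_pure_tensor_sum:
  assumes "finite I" "depends_on I t"
  obtains n :: nat and c a where "t = (\<lambda>x. \<Sum>i<n. c i * pure_tensor I (a i) x)"
proof -
  define Y where "Y = {y::nat\<Rightarrow>bool. \<forall>i. i \<notin> I \<longrightarrow> \<not> y i}"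
  have "Y \<subseteq> (\<lambda>B i. i \<in> B) ` Pow I"
  proof
    fix y assume "y \<in> Y"
    then have "y = (\<lambda>i. i \<in> {i. y i})" "{i. y i} \<in> Pow I" unfolding Y_def by auto
    then show "y \<in> (\<lambda>B i. i \<in> B) ` Pow I" by blast
  qed
  then have fY: "finite Y" using assms(1) finite_subset by blast
  define \<delta> where "\<delta> y = (\<lambda>r b. if b = y r then 1 else (0::complex))" for y :: "nat \<Rightarrow> bool"
  have \<delta>: "pure_tensor I (\<delta> y) x = (if \<forall>r\<in>I. x r = y r then 1 else 0)" for y x
    unfolding \<delta>_def pure_tensor_def using assms(1) by (auto simp: prod_zero_iff)
  have rep: "t x = (\<Sum>y\<in>Y. t y * pure_tensor I (\<delta> y) x)" for x
  proof -
    define y0 where "y0 = (\<lambda>i. i \<in> I \<and> x i)"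
    have y0Y: "y0 \<in> Y" unfolding Y_def y0_def by auto
    have "(\<Sum>y\<in>Y. t y * pure_tensor I (\<delta> y) x) = (\<Sum>y\<in>Y. if y = y0 then t y0 else 0)"
    proof (rule sum.cong)
      fix y assume "y \<in> Y"
      then have "(\<forall>r\<in>I. x r = y r) \<longleftrightarrow> y = y0" unfolding Y_def y0_def by (auto simp: fun_eq_iff)
      then show "t y * pure_tensor I (\<delta> y) x = (if y = y0 then t y0 else 0)" by (simp add: \<delta>)
    qed simp
    also have "\<dots> = t y0" using fY y0Y by simp
    also have "t y0 = t x" using assms(2) unfolding depends_on_def y0_def by auto
    finally show ?thesis by simp
  qed
  obtain h where h: "bij_betw h {0..<card Y} Y" using ex_bij_betw_nat_finite[OF fY] by blast
  have "t x = (\<Sum>i<card Y. t (h i) * pure_tensor I (\<delta> (h i)) x)" for x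
    unfolding rep[of x] using sum.reindex_bij_betw[OF h, of "\<lambda>y. t y * pure_tensor I (\<delta> y) x"]
    by (simp add: atLeast0LessThan)
  then show ?thesis by (intro that) (rule ext)
qed

lemma tensor_space_iff_depends_on:
  assumes "finite I"
  shows "t \<in> tensor_space I \<longleftrightarrow> depends_on I t"
proof
  assume "depends_on I t"
  then obtain n :: nat and c a where "t = (\<lambda>x. \<Sum>i<n. c i * pure_tensor I (a i) x)"
    using depends_on_imp_pure_tensor_sum[OF assms] by blast
  then show "t \<in> tensor_space I" unfolding tensor_space_def
    by (simp only:) (rule clin_span_sum, auto)
qed (rule depends_on_tensor_space)

lemma pure_tensor_remove:
  assumes "finite I" "r \<in> I"
  shows "pure_tensor I a x = a r (x r) * (\<Prod>i\<in>I-{r}. a i (x i))"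
  unfolding pure_tensor_def using assms by (simp add: prod.remove)

text \<open>\<open>\<Sigma>\<^sup>0\<^sub>r\<^sub>,\<^sub>u\<close> is the kernel of this pairing of slot \<open>r\<close> with \<open>u \<in> V\<^sub>r\<close>.\<close>
definition contract :: "nat \<Rightarrow> (bool \<Rightarrow> complex) \<Rightarrow> ((nat \<Rightarrow> bool) \<Rightarrow> complex) \<Rightarrow> (nat \<Rightarrow> bool) \<Rightarrow> complex" where
  "contract r u t x = u True * t (x(r:=True)) + u False * t (x(r:=False))"

lemma contract_scale: "contract r u (\<lambda>x. c * t x) x = c * contract r u t x"
  by (simp add: contract_def algebra_simps)

lemma contract_slot_product:
  assumes "\<And>b. t (x(r:=b)) = g b * K"
  shows "contract r u t x = (u True * g True + u False * g False) * K"
  by (simp add: contract_def assms algebra_simps)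

lemma contract_Sigma0:
  assumes "r \<in> {1..m}" "t \<in> Sigma0 m r u"
  shows "contract r u t x = 0"
proof -
  obtain n :: nat and w c where w: "\<forall>i<n. w i \<in> {pure_tensor {1..m} a | a. a r \<in> ann u}"
    and t: "\<And>x. t x = (\<Sum>i<n. c i * w i x)"
    using assms(2) unfolding Sigma0_def by (elim clin_spanE) (rule that)
  have "contract r u (w i) x = 0" if "i < n" for i
  proof -
    obtain a where a: "w i = pure_tensor {1..m} a" "a r \<in> ann u" using w \<open>i < n\<close> by blast
    have "contract r u (w i) x = (u True * a r True + u False * a r False) * (\<Prod>k\<in>{1..m}-{r}. a k (x k))"
    proof (rule contract_slot_product)
      fix b
      have "(\<Prod>k\<in>{1..m}-{r}. a k ((x(r:=b)) k)) = (\<Prod>k\<in>{1..m}-{r}. a k (x k))"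
        by (rule prod.cong) auto
      then show "w i (x(r:=b)) = a r b * (\<Prod>k\<in>{1..m}-{r}. a k (x k))"
        unfolding a(1) using pure_tensor_remove[OF finite_atLeastAtMost assms(1), of a "x(r:=b)"] by simp
    qed
    then show ?thesis using a(2) unfolding ann_def by (simp add: mult.commute)
  qed
  moreover have "contract r u t x = (\<Sum>i<n. c i * contract r u (w i) x)"
    by (simp add: t contract_def sum_distrib_left sum.distrib algebra_simps)
  ultimately show ?thesis by simp
qed

lemma bool_vector_eq_0_iff: "(v :: bool \<Rightarrow> complex) = (\<lambda>_. 0) \<longleftrightarrow> v True = 0 \<and> v False = 0"
  by (metis (full_types))

lemma Sigma0_of_contract:
  assumes r: "r \<in> {1..m}" and t: "depends_on {1..m} t" and c: "\<And>x. contract r u t x = 0"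
  shows "t \<in> Sigma0 m r u"
proof (cases "u = (\<lambda>_. 0)")
  case True
  then have "Sigma0 m r u = tensor_space {1..m}" by (simp add: Sigma0_def tensor_space_def ann_def)
  then show ?thesis using t tensor_space_iff_depends_on by simp
next
  case False
  define \<alpha> where "\<alpha> = (\<lambda>b. if b then u False else - u True)"
  have \<alpha>: "\<alpha> \<in> ann u" by (simp add: ann_def \<alpha>_def algebra_simps)
  define s where "s x = (if u True \<noteq> 0 then - t (x(r:=False)) / u True else t (x(r:=True)) / u False)" for x
  have ts: "t x = \<alpha> (x r) * s x" for x
  proof -
    have cx: "u True * t (x(r:=True)) + u False * t (x(r:=False)) = 0"
      using c[of x] by (simp add: contract_def)
    have uF: "u True = 0 \<Longrightarrow> u False \<noteq> 0" using False bool_vector_eq_0_iff by blast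
    show ?thesis
    proof (cases "x r")
      case True
      then have "t x = t (x(r:=True))" by (simp add: fun_upd_idem)
      then show ?thesis using True cx uF unfolding \<alpha>_def s_def
        by (auto simp: field_simps) (metis add_eq_0_iff mult.commute)
    next
      case F: False
      then have "t x = t (x(r:=False))" by (simp add: fun_upd_idem)
      then show ?thesis using F cx uF unfolding \<alpha>_def s_def by (auto simp: field_simps)
    qed
  qed
  have "t (x(r:=b)) = t (y(r:=b))" if "\<forall>i\<in>{1..m} - {r}. x i = y i" for x y b
    using t that unfolding depends_on_def by auto
  then have "depends_on ({1..m} - {r}) s" unfolding depends_on_def s_def by simp
  then obtain n :: nat and cc a where s: "s = (\<lambda>x. \<Sum>i<n. cc i * pure_tensor ({1..m} - {r}) (a i) x)"
    using depends_on_imp_pure_tensor_sum by blast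
  have "\<alpha> (x r) * pure_tensor ({1..m} - {r}) (a i) x = pure_tensor {1..m} ((a i)(r:=\<alpha>)) x" for i x
  proof -
    have "(\<Prod>k\<in>{1..m}-{r}. ((a i)(r:=\<alpha>)) k (x k)) = pure_tensor ({1..m} - {r}) (a i) x"
      unfolding pure_tensor_def by (rule prod.cong) auto
    then show ?thesis using pure_tensor_remove[of "{1..m}" r "(a i)(r:=\<alpha>)" x] r by simp
  qed
  then have "t = (\<lambda>x. \<Sum>i<n. cc i * pure_tensor {1..m} ((a i)(r:=\<alpha>)) x)"
    by (auto simp: fun_eq_iff ts s sum_distrib_left algebra_simps)
  then show ?thesis unfolding Sigma0_def using \<alpha> by (simp only:) (rule clin_span_sum, auto)
qed

lemma cline_self: "x \<in> cline x"
  unfolding cline_def by (rule range_eqI[where x=1]) simp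

lemma cline_eq_imp_multiple:
  assumes "cline a = cline b" obtains c where "a = (\<lambda>i. c * b i)"
  using cline_self[of a] assms that unfolding cline_def by auto

lemma cline_scale:
  assumes "c \<noteq> 0" shows "cline (\<lambda>i. c * x i) = cline x"
proof
  show "cline (\<lambda>i. c * x i) \<subseteq> cline x" unfolding cline_def
  proof
    fix y assume "y \<in> range (\<lambda>d i. d * (c * x i))"
    then obtain d where "y = (\<lambda>i. (d * c) * x i)" by (auto simp: mult.assoc)
    then show "y \<in> range (\<lambda>d i. d * x i)" by blast
  qed
  show "cline x \<subseteq> cline (\<lambda>i. c * x i)" unfolding cline_def
  proof
    fix y assume "y \<in> range (\<lambda>d i. d * x i)"
    then obtain d where "y = (\<lambda>i. d * x i)" by blast
    then have "y = (\<lambda>i. (d / c) * (c * x i))" using assms by (simp add: fun_eq_iff)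
    then show "y \<in> range (\<lambda>d i. d * (c * x i))" by blast
  qed
qed

lemma cline_eq_of_proportional:
  fixes x y :: "'a \<Rightarrow> complex"
  assumes "y \<noteq> (\<lambda>_. 0)" "x \<noteq> (\<lambda>_. 0)" "\<And>i k. x i * y k = x k * y i"
  shows "cline x = cline y"
proof -
  obtain k where k: "y k \<noteq> 0" using assms(1) by auto
  define c where "c = x k / y k"
  have xc: "x = (\<lambda>i. c * y i)"
  proof
    fix i show "x i = c * y i" using assms(3)[of i k] k unfolding c_def by (simp add: field_simps)
  qed
  then have "c \<noteq> 0" using assms(2) by auto
  then show ?thesis using xc cline_scale by simp
qed

lemma bool_vector_neq_0:
  "(\<lambda>b. if b then 1 else 0 :: complex) \<noteq> (\<lambda>_. 0)"
  "(\<lambda>b. if b then 0 else 1 :: complex) \<noteq> (\<lambda>_. 0)"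
  "(\<lambda>b. 1 :: complex) \<noteq> (\<lambda>_. 0)"
  by (auto simp: fun_eq_iff)

lemma det_eq_0_of_common_kernel:
  fixes a1 b1 a2 b2 :: complex
  assumes "u \<noteq> (\<lambda>_. 0)" "u True * a1 + u False * b1 = 0" "u True * a2 + u False * b2 = 0"
  shows "a1 * b2 = a2 * b1"
proof -
  have "u True * (a1 * b2 - a2 * b1) = b2 * (u True * a1 + u False * b1) - b1 * (u True * a2 + u False * b2)"
    "u False * (a1 * b2 - a2 * b1) = a1 * (u True * a2 + u False * b2) - a2 * (u True * a1 + u False * b1)"
    by (simp_all add: algebra_simps)
  moreover have "u True \<noteq> 0 \<or> u False \<noteq> 0" using assms(1) bool_vector_eq_0_iff by blast
  ultimately show ?thesis using assms(2,3) by auto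
qed

section \<open>Families of binary forms with linear factors in prescribed slots\<close>

lemma coprime_cross_multiple:
  fixes p q a b :: "'a :: factorial_ring_gcd"
  assumes "coprime p q" "p \<noteq> 0" "q * a = p * b"
  shows "a = p * (a div p)" "b = q * (a div p)"
proof -
  have "p dvd q * a" using assms(3) by simp
  then have "p dvd a" using coprime_dvd_mult_right_iff[OF assms(1)] by simp
  then show a: "a = p * (a div p)" by simp
  then have "p * b = p * (q * (a div p))" using assms(3) by (metis mult.left_commute)
  then show "b = q * (a div p)" using assms(2) by simp
qed

lemma rank_one_family_ratio:
  fixes A B :: "'x \<Rightarrow> 'a :: factorial_ring_gcd"
  assumes rank1: "\<And>x y. A x * B y = A y * B x" and nz: "A x0 \<noteq> 0 \<or> B x0 \<noteq> 0"
  obtains p q where "coprime p q" "\<And>x. q * A x = p * B x"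
proof -
  define g where "g = gcd (A x0) (B x0)"
  have g0: "g \<noteq> 0" using nz unfolding g_def by simp
  obtain p q where pq: "A x0 = p * g" "B x0 = q * g" "coprime p q"
    using gcd_coprime_exists[OF g0[unfolded g_def]] unfolding g_def by blast
  have "q * A x = p * B x" for x
  proof -
    have "g * (q * A x) = B x0 * A x" using pq by (simp add: algebra_simps)
    also have "\<dots> = A x0 * B x" using rank1[of x0 x] by (simp add: algebra_simps)
    also have "\<dots> = g * (p * B x)" using pq by (simp add: algebra_simps)
    finally show ?thesis using g0 by simp
  qed
  then show ?thesis using that pq(3) by blast
qed

lemma homog_contract_rank_one:
  fixes P :: "(nat \<Rightarrow> bool) \<Rightarrow> complex poly"
  assumes deg: "\<And>x. degree (P x) \<le> d"
    and C: "\<And>v. v \<noteq> (\<lambda>_. 0) \<Longrightarrow>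
      \<exists>u. u \<noteq> (\<lambda>_. 0) \<and> (\<forall>x. contract r u (\<lambda>x. homog d (P x) v) x = 0)"
  shows "P (x(r:=True)) * P (y(r:=False)) = P (y(r:=True)) * P (x(r:=False))"
proof -
  have "poly (P (x(r:=True)) * P (y(r:=False)) - P (y(r:=True)) * P (x(r:=False))) t = 0" for t
  proof -
    obtain u where u: "u \<noteq> (\<lambda>_. 0)" "\<forall>x. contract r u (\<lambda>x. homog d (P x) (affine_point t)) x = 0"
      using C[OF affine_point_nonzero] by blast
    have "homog d (P (x(r:=True))) (affine_point t) * homog d (P (y(r:=False))) (affine_point t) =
        homog d (P (y(r:=True))) (affine_point t) * homog d (P (x(r:=False))) (affine_point t)"
      by (rule det_eq_0_of_common_kernel[OF u(1)]) (use u(2) in \<open>auto simp: contract_def\<close>)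
    then show ?thesis using deg by (simp add: homog_affine_point)
  qed
  then have "P (x(r:=True)) * P (y(r:=False)) - P (y(r:=True)) * P (x(r:=False)) = 0"
    using poly_all_0_iff_0 by blast
  then show ?thesis by simp
qed

lemma slot_factor:
  fixes P :: "(nat \<Rightarrow> bool) \<Rightarrow> complex poly"
  assumes deg: "\<And>x. degree (P x) \<le> d"
    and nz: "\<And>v. v \<noteq> (\<lambda>_. 0) \<Longrightarrow> \<exists>x. homog d (P x) v \<noteq> 0"
    and C: "\<And>v. v \<noteq> (\<lambda>_. 0) \<Longrightarrow>
      \<exists>u. u \<noteq> (\<lambda>_. 0) \<and> (\<forall>x. contract r u (\<lambda>x. homog d (P x) v) x = 0)"
    and D: "\<And>u. u \<noteq> (\<lambda>_. 0) \<Longrightarrow>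
      \<exists>v. v \<noteq> (\<lambda>_. 0) \<and> (\<forall>x. contract r u (\<lambda>x. homog d (P x) v) x = 0)"
  obtains p q where "coprime p q" "p \<noteq> 0" "q \<noteq> 0" "1 \<le> max (degree p) (degree q)"
    "\<And>x. q * P (x(r:=True)) = p * P (x(r:=False))"
proof -
  have P_upd: "P (z(r := z r)) = P z" for z by simp
  obtain x0 where "homog d (P x0) (\<lambda>_. 1) \<noteq> 0" using nz[OF bool_vector_neq_0(3)] by blast
  then have "P x0 \<noteq> 0" by auto
  then have "P (x0(r:=True)) \<noteq> 0 \<or> P (x0(r:=False)) \<noteq> 0" using P_upd[of x0] by (cases "x0 r") auto
  then obtain p q where cop: "coprime p q" and rel: "\<And>x. q * P (x(r:=True)) = p * P (x(r:=False))"
    using rank_one_family_ratio[of "\<lambda>x. P (x(r:=True))" "\<lambda>x. P (x(r:=False))" x0]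
      homog_contract_rank_one[OF deg C] by blast
  text \<open>Constant \<open>p, q\<close> are excluded by pairing the two coordinate points of slot \<open>r\<close>.\<close>
  have deg1: "1 \<le> max (degree p) (degree q)"
  proof (rule ccontr)
    assume "\<not> 1 \<le> max (degree p) (degree q)"
    then have d0: "degree p = 0" "degree q = 0" by auto
    have rel_homog: "coeff q 0 * homog d (P (x(r:=True))) v = coeff p 0 * homog d (P (x(r:=False))) v"
      for x v
    proof -
      have "homog (0 + d) (q * P (x(r:=True))) v = homog (0 + d) (p * P (x(r:=False))) v"
        using rel by simp
      then show ?thesis using d0 deg by (simp only: homog_mult homog_degree_0)
    qed
    obtain v where v: "v \<noteq> (\<lambda>_. 0)" "\<And>x. homog d (P (x(r:=True))) v = 0"
      using D[OF bool_vector_neq_0(1)] by (auto simp: contract_def)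
    obtain z where z: "homog d (P z) v \<noteq> 0" using nz v(1) by blast
    have "\<not> z r"
    proof
      assume "z r" then have "z(r:=True) = z" by (simp add: fun_upd_idem)
      then show False using v(2)[of z] z by simp
    qed
    then have "coeff p 0 = 0" using rel_homog[of z v] v(2) z P_upd[of z] by simp
    obtain v' where v': "v' \<noteq> (\<lambda>_. 0)" "\<And>x. homog d (P (x(r:=False))) v' = 0"
      using D[OF bool_vector_neq_0(2)] by (auto simp: contract_def)
    obtain z' where z': "homog d (P z') v' \<noteq> 0" using nz v'(1) by blast
    have "z' r"
    proof (rule ccontr)
      assume "\<not> z' r" then have "z'(r:=False) = z'" by (simp add: fun_upd_idem)
      then show False using v'(2)[of z'] z' by simp
    qed
    then have "coeff q 0 = 0" using rel_homog[of z' v'] v'(2) z' P_upd[of z'] by simp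
    have "p = 0" "q = 0"
      using d0 \<open>coeff p 0 = 0\<close> \<open>coeff q 0 = 0\<close> leading_coeff_0_iff by fastforce+
    then show False using cop by simp
  qed
  have "p \<noteq> 0" "q \<noteq> 0"
    using cop deg1 by (auto elim!: is_unit_polyE)
  then show ?thesis using that cop deg1 rel by blast
qed


lemma factor_out_slots:
  fixes P :: "(nat \<Rightarrow> bool) \<Rightarrow> complex poly" and L :: "nat \<Rightarrow> bool \<Rightarrow> complex poly"
  defines "k r \<equiv> max (degree (L r True)) (degree (L r False))"
  assumes "finite S" "R \<subseteq> S"
    and L_nonzero: "\<And>r b. r \<in> S \<Longrightarrow> L r b \<noteq> 0"
    and L_coprime: "\<And>r. r \<in> S \<Longrightarrow> coprime (L r True) (L r False)"
    and rel: "\<And>r x. r \<in> S \<Longrightarrow> L r False * P (x(r:=True)) = L r True * P (x(r:=False))"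
    and deg: "\<And>x. degree (P x) \<le> d"
    and dep: "\<And>x y. \<forall>i\<in>A. x i = y i \<Longrightarrow> P x = P y"
    and nz: "P x0 \<noteq> 0"
  shows "\<exists>s. (\<forall>x. P x = (\<Prod>r\<in>R. L r (x r)) * s x) \<and> (\<forall>x y. (\<forall>i\<in>A - R. x i = y i) \<longrightarrow> s x = s y) \<and>
             (\<forall>x. s x \<noteq> 0 \<longrightarrow> degree (s x) + (\<Sum>r\<in>R. k r) \<le> d) \<and> (\<exists>x. s x \<noteq> 0)"
  using finite_subset[OF assms(3,2)] assms(3)
proof (induction R rule: finite_induct)
  case empty
  show ?case by (rule exI[where x=P]) (use deg dep nz in auto)
next
  case (insert r R)
  then have rS: "r \<in> S" and RS: "R \<subseteq> S" by auto
  obtain s where s1: "\<forall>x. P x = (\<Prod>r\<in>R. L r (x r)) * s x"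
    and s2: "\<forall>x y. (\<forall>i\<in>A - R. x i = y i) \<longrightarrow> s x = s y"
    and s3: "\<forall>x. s x \<noteq> 0 \<longrightarrow> degree (s x) + (\<Sum>r\<in>R. k r) \<le> d"
    and s4: "\<exists>x. s x \<noteq> 0"
    using insert.IH[OF RS] by blast
  define p where "p = L r True"
  define q where "q = L r False"
  have p0: "p \<noteq> 0" and q0: "q \<noteq> 0" and cop: "coprime p q"
    using L_nonzero L_coprime rS unfolding p_def q_def by auto
  define \<Pi> where "\<Pi> x = (\<Prod>r\<in>R. L r (x r))" for x
  define s' where "s' x = s (x(r:=True)) div p" for x
  have \<Pi>_upd: "\<Pi> (x(r:=b)) = \<Pi> x" for x b
    unfolding \<Pi>_def by (rule prod.cong) (use insert.hyps(2) in auto)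
  have \<Pi>_nonzero: "\<Pi> x \<noteq> 0" for x
    unfolding \<Pi>_def using insert.hyps(1) L_nonzero RS by (auto simp: prod_zero_iff)
  have s_upd: "s (x(r:=b)) = L r b * s' x" for x b
  proof -
    have P_upd: "P (x(r:=b)) = \<Pi> x * s (x(r:=b))" for b
      using s1 \<Pi>_upd unfolding \<Pi>_def by metis
    have "\<Pi> x * (q * s (x(r:=True))) = \<Pi> x * (p * s (x(r:=False)))"
      using rel[OF rS, of x] unfolding P_upd p_def q_def by (simp add: algebra_simps)
    then have "q * s (x(r:=True)) = p * s (x(r:=False))" using \<Pi>_nonzero by simp
    from coprime_cross_multiple[OF cop p0 this] show ?thesis
      unfolding s'_def p_def q_def by (cases b) simp_all
  qed
  have sx: "s x = L r (x r) * s' x" for x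
    using s_upd[of x "x r"] by simp
  show ?case
  proof (rule exI[where x=s'], intro conjI allI impI)
    fix x
    have "P x = (L r (x r) * \<Pi> x) * s' x" using s1 sx unfolding \<Pi>_def by (simp add: algebra_simps)
    then show "P x = (\<Prod>r\<in>insert r R. L r (x r)) * s' x"
      unfolding \<Pi>_def using insert.hyps(1,2) by simp
  next
    fix x y :: "nat \<Rightarrow> bool"
    assume "\<forall>i\<in>A - insert r R. x i = y i"
    then have "\<forall>i\<in>A - R. (x(r:=True)) i = (y(r:=True)) i" by auto
    then have "s (x(r:=True)) = s (y(r:=True))" using s2 by blast
    then show "s' x = s' y" unfolding s'_def by simp
  next
    fix x assume nz': "s' x \<noteq> 0"
    have "degree (L r b) + degree (s' x) + (\<Sum>r\<in>R. k r) \<le> d" for b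
    proof -
      have "s (x(r:=b)) \<noteq> 0" using s_upd[of x b] L_nonzero[OF rS] nz' by simp
      then have "degree (s (x(r:=b))) + (\<Sum>r\<in>R. k r) \<le> d" using s3 by blast
      moreover have "degree (s (x(r:=b))) = degree (L r b) + degree (s' x)"
        using s_upd[of x b] L_nonzero[OF rS] nz' by (simp add: degree_mult_eq)
      ultimately show ?thesis by simp
    qed
    moreover have "(\<Sum>r\<in>insert r R. k r) = k r + (\<Sum>r\<in>R. k r)" using insert.hyps(1,2) by simp
    ultimately show "degree (s' x) + (\<Sum>r\<in>insert r R. k r) \<le> d"
      unfolding k_def by (smt (verit) max_def add.commute add.left_commute)
  next
    obtain x where "s x \<noteq> 0" using s4 by blast
    then show "\<exists>x. s' x \<noteq> 0" using sx[of x] by auto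
  qed
qed

lemma coprime_linear_det_nonzero:
  fixes p q :: "complex poly"
  assumes cop: "coprime p q" and dp: "degree p \<le> 1" and dq: "degree q \<le> 1"
    and mx: "max (degree p) (degree q) = 1"
  shows "coeff p 0 * coeff q 1 \<noteq> coeff p 1 * coeff q 0"
proof
  assume eq: "coeff p 0 * coeff q 1 = coeff p 1 * coeff q 0"
  have sm: "smult (coeff p 1) q = smult (coeff q 1) p"
  proof (rule poly_eqI)
    fix n
    show "coeff (smult (coeff p 1) q) n = coeff (smult (coeff q 1) p) n"
    proof (cases "n \<le> 1")
      case True
      then have "n = 0 \<or> n = 1" by auto
      then show ?thesis using eq by (auto simp: algebra_simps)
    next
      case False
      then have "coeff p n = 0" "coeff q n = 0" using dp dq by (simp_all add: coeff_eq_0)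
      then show ?thesis by simp
    qed
  qed
  have "degree p = 1 \<or> degree q = 1" using mx by (auto simp: max_def split: if_splits)
  then show False
  proof
    assume d1: "degree p = 1"
    then have c1: "coeff p 1 \<noteq> 0" using leading_coeff_0_iff[of p] by auto
    have "q = smult (inverse (coeff p 1)) (smult (coeff p 1) q)" using c1 by simp
    also have "\<dots> = smult (inverse (coeff p 1) * coeff q 1) p" unfolding sm by simp
    finally have "p dvd q" using dvd_smult[OF dvd_refl[of p]] by (metis)
    then have "is_unit p" using coprime_common_divisor[OF cop dvd_refl] by simp
    then have "degree p = 0" using is_unit_iff_degree[of p] by (cases "p = 0") auto
    then show False using d1 by simp
  next
    assume d1: "degree q = 1"
    then have c1: "coeff q 1 \<noteq> 0" using leading_coeff_0_iff[of q] by auto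
    have "p = smult (inverse (coeff q 1)) (smult (coeff q 1) p)" using c1 by simp
    also have "\<dots> = smult (inverse (coeff q 1) * coeff p 1) q" unfolding sm[symmetric] by simp
    finally have "q dvd p" using dvd_smult[OF dvd_refl[of q]] by (metis)
    then have "is_unit q" using coprime_common_divisor[OF cop _ dvd_refl] by simp
    then have "degree q = 0" using is_unit_iff_degree[of q] by (cases "q = 0") auto
    then show False using d1 by simp
  qed
qed

lemma all_eq_1_of_sum_le_card:
  assumes "finite S" "\<And>r. r \<in> S \<Longrightarrow> 1 \<le> k r" "(\<Sum>r\<in>S. k r) \<le> card S"
  shows "r \<in> S \<Longrightarrow> k r = (1::nat)"
proof (rule ccontr)
  assume "r \<in> S" "k r \<noteq> 1"
  then have "(\<Sum>r\<in>S. (1::nat)) < (\<Sum>r\<in>S. k r)"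
    using sum_strict_mono_ex1[OF assms(1), of "\<lambda>_. 1" k] assms(2) by force
  then show False using assms(3) by simp
qed

lemma linear_factorization:
  fixes P :: "(nat \<Rightarrow> bool) \<Rightarrow> complex poly" and S A :: "nat set"
  assumes fS: "finite S" and dS: "card S = d"
    and deg: "\<And>x. degree (P x) \<le> d"
    and dep: "\<And>x y. \<forall>i\<in>A. x i = y i \<Longrightarrow> P x = P y"
    and nz: "\<And>v. v \<noteq> (\<lambda>_. 0) \<Longrightarrow> \<exists>x. homog d (P x) v \<noteq> 0"
    and C: "\<And>r v. r \<in> S \<Longrightarrow> v \<noteq> (\<lambda>_. 0) \<Longrightarrow>
      \<exists>u. u \<noteq> (\<lambda>_. 0) \<and> (\<forall>x. contract r u (\<lambda>x. homog d (P x) v) x = 0)"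
    and D: "\<And>r u. r \<in> S \<Longrightarrow> u \<noteq> (\<lambda>_. 0) \<Longrightarrow>
      \<exists>v. v \<noteq> (\<lambda>_. 0) \<and> (\<forall>x. contract r u (\<lambda>x. homog d (P x) v) x = 0)"
  obtains L s where "\<And>r b. r \<in> S \<Longrightarrow> degree (L r b) \<le> 1"
    "\<And>r. r \<in> S \<Longrightarrow> coeff (L r True) 0 * coeff (L r False) 1 \<noteq> coeff (L r True) 1 * coeff (L r False) 0"
    "\<And>x. degree (s x) = 0" "\<And>x y. \<forall>i\<in>A - S. x i = y i \<Longrightarrow> s x = s y"
    "\<exists>x. s x \<noteq> 0" "\<And>x. P x = (\<Prod>r\<in>S. L r (x r)) * s x"
proof -
  have "\<forall>r\<in>S. \<exists>L. coprime (L True) (L False) \<and> L True \<noteq> 0 \<and> L False \<noteq> 0 \<and>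
      1 \<le> max (degree (L True)) (degree (L False)) \<and>
      (\<forall>x. L False * P (x(r:=True)) = L True * P (x(r:=False)))"
  proof
    fix r assume r: "r \<in> S"
    obtain p q where "coprime p q" "p \<noteq> 0" "q \<noteq> 0" "1 \<le> max (degree p) (degree q)"
      "\<And>x. q * P (x(r:=True)) = p * P (x(r:=False))"
      by (rule slot_factor[OF deg nz C[OF r] D[OF r]]) auto
    then show "\<exists>L. coprime (L True) (L False) \<and> L True \<noteq> 0 \<and> L False \<noteq> 0 \<and>
      1 \<le> max (degree (L True)) (degree (L False)) \<and>
      (\<forall>x. L False * P (x(r:=True)) = L True * P (x(r:=False)))"
      by (intro exI[of _ "\<lambda>b. if b then p else q"]) simp
  qed
  then obtain L where L: "\<And>r. r \<in> S \<Longrightarrow> coprime (L r True) (L r False) \<and> L r True \<noteq> 0 \<and>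
      L r False \<noteq> 0 \<and> 1 \<le> max (degree (L r True)) (degree (L r False)) \<and>
      (\<forall>x. L r False * P (x(r:=True)) = L r True * P (x(r:=False)))"
    by metis
  define k where "k r = max (degree (L r True)) (degree (L r False))" for r
  obtain x0 where "homog d (P x0) (\<lambda>_. 1) \<noteq> 0" using nz[OF bool_vector_neq_0(3)] by blast
  then have "P x0 \<noteq> 0" by auto
  moreover have "L r b \<noteq> 0" if "r \<in> S" for r b using L[OF that] by (cases b) auto
  ultimately obtain s where s1: "\<forall>x. P x = (\<Prod>r\<in>S. L r (x r)) * s x"
    and s2: "\<forall>x y. (\<forall>i\<in>A - S. x i = y i) \<longrightarrow> s x = s y"
    and s3: "\<forall>x. s x \<noteq> 0 \<longrightarrow> degree (s x) + (\<Sum>r\<in>S. k r) \<le> d"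
    and s4: "\<exists>x. s x \<noteq> 0"
    using factor_out_slots[OF fS subset_refl, of L P d A x0] L deg dep unfolding k_def by blast
  text \<open>Each slot factor has degree at least one, and together they use up the degree \<open>|S|\<close>.\<close>
  have k1: "k r = 1" if "r \<in> S" for r
    by (rule all_eq_1_of_sum_le_card[OF fS _ _ that]) (use s3 s4 dS L in \<open>auto simp: k_def\<close>)
  then have "(\<Sum>r\<in>S. k r) = card S" by simp
  then have "degree (s x) = 0" for x using s3 dS by (cases "s x = 0") auto
  moreover have "degree (L r b) \<le> 1" if "r \<in> S" for r b
    using k1[OF that] unfolding k_def by (cases b) auto
  moreover have "coeff (L r True) 0 * coeff (L r False) 1 \<noteq> coeff (L r True) 1 * coeff (L r False) 0"
    if "r \<in> S" for r
    using coprime_linear_det_nonzero L[OF that] k1[OF that] unfolding k_def by simp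
  ultimately show ?thesis using that s1 s2 s4 by blast
qed


text \<open>\<open>perp v\<close> spans the annihilator \<open>v\<^sup>0\<close>.\<close>
definition perp :: "(bool \<Rightarrow> complex) \<Rightarrow> bool \<Rightarrow> complex" where
  "perp v = (\<lambda>b. if b then v False else - v True)"

definition perp_matrix :: "bool \<Rightarrow> bool \<Rightarrow> complex" where
  "perp_matrix = (\<lambda>b c. if b then (if c then 0 else 1) else (if c then -1 else 0))"

definition mat_mult2 :: "(bool \<Rightarrow> bool \<Rightarrow> complex) \<Rightarrow> (bool \<Rightarrow> bool \<Rightarrow> complex) \<Rightarrow> bool \<Rightarrow> bool \<Rightarrow> complex" where
  "mat_mult2 A B = (\<lambda>b c. A b True * B True c + A b False * B False c)"

lemma perp_in_ann: "perp v \<in> ann v"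
  by (simp add: perp_def ann_def algebra_simps)

lemma perp_eq_0_iff: "perp v = (\<lambda>_. 0) \<longleftrightarrow> v = (\<lambda>_. 0)"
  by (auto simp: bool_vector_eq_0_iff perp_def)

lemma perp_perp: "perp (perp v) = (\<lambda>b. - v b)"
  by (auto simp: perp_def fun_eq_iff)

lemma perp_uminus: "perp (\<lambda>b. - v b) = (\<lambda>b. - perp v b)"
  by (auto simp: perp_def fun_eq_iff)

lemma perp_eq_app2: "perp v = app2 perp_matrix v"
  by (auto simp: perp_def app2_def perp_matrix_def fun_eq_iff)

lemma app2_uminus: "app2 M (\<lambda>b. - v b) = (\<lambda>b. - app2 M v b)"
  by (auto simp: app2_def fun_eq_iff algebra_simps)

lemma app2_zero: "app2 M (\<lambda>_. 0) = (\<lambda>_. 0)"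
  by (simp add: app2_def)

lemma app2_app2: "app2 A (app2 B v) = app2 (mat_mult2 A B) v"
  by (auto simp: app2_def mat_mult2_def fun_eq_iff algebra_simps)

lemma ann_eq_multiple_perp:
  assumes "v \<noteq> (\<lambda>_. 0)" "\<alpha> \<in> ann v" "\<alpha> \<noteq> (\<lambda>_. 0)"
  obtains c where "c \<noteq> 0" "\<alpha> = (\<lambda>b. c * perp v b)"
proof -
  have rel: "\<alpha> True * v True + \<alpha> False * v False = 0" using assms(2) by (simp add: ann_def)
  define c where "c = (if v False = 0 then - \<alpha> False / v True else \<alpha> True / v False)"
  have "\<alpha> = (\<lambda>b. c * perp v b)"
  proof (cases "v False = 0")
    case True
    then have "v True \<noteq> 0" using assms(1) bool_vector_eq_0_iff by blast
    then show ?thesis using rel True unfolding c_def perp_def by (auto simp: fun_eq_iff)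
  next
    case False
    then have "\<alpha> False = - \<alpha> True * v True / v False" using rel by (simp add: field_simps add_eq_0_iff)
    then show ?thesis using False unfolding c_def perp_def by (auto simp: fun_eq_iff)
  qed
  moreover from this have "c \<noteq> 0" using assms(3) by auto
  ultimately show ?thesis using that by blast
qed

lemma app2_invertible_nonzero:
  assumes "invertible2 M" "\<alpha> \<noteq> (\<lambda>_. 0)" shows "app2 M \<alpha> \<noteq> (\<lambda>_. 0)"
proof
  assume M\<alpha>: "app2 M \<alpha> = (\<lambda>_. 0)"
  obtain N where "\<forall>\<alpha>. app2 N (app2 M \<alpha>) = \<alpha>"
    using assms(1) unfolding invertible2_def by blast
  then have "\<alpha> = app2 N (app2 M \<alpha>)" by simp
  then show False using assms(2) unfolding M\<alpha> app2_zero by simp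
qed

lemma invertible2_of_det:
  assumes "M True True * M False False - M True False * M False True \<noteq> 0"
  shows "invertible2 M"
proof -
  define dt where "dt = M True True * M False False - M True False * M False True"
  define N where "N = (\<lambda>b c. inverse dt * (if b then (if c then M False False else - M True False)
                            else (if c then - M False True else M True True)))"
  have "app2 N (app2 M \<alpha>) b = inverse dt * (dt * \<alpha> b)" "app2 M (app2 N \<alpha>) b = inverse dt * (dt * \<alpha> b)"
    for \<alpha> b
    unfolding N_def app2_def dt_def by (cases b; simp add: algebra_simps)+
  moreover have "dt \<noteq> 0" using assms unfolding dt_def .
  ultimately have "\<forall>\<alpha>. app2 N (app2 M \<alpha>) = \<alpha> \<and> app2 M (app2 N \<alpha>) = \<alpha>" by (simp add: fun_eq_iff)
  then show ?thesis unfolding invertible2_def by blast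
qed

text \<open>The point map of \<open>g = [M]\<close>: the point \<open>u\<close> of \<open>P(V\<^sub>r)\<close> with \<open>u\<^sup>0 = M(v\<^sup>0)\<close>.\<close>
definition point_map :: "(bool \<Rightarrow> bool \<Rightarrow> complex) \<Rightarrow> (bool \<Rightarrow> complex) \<Rightarrow> bool \<Rightarrow> complex" where
  "point_map M v = perp (app2 M (perp v))"

lemma point_map_eq_app2: "point_map M v = app2 (mat_mult2 perp_matrix (mat_mult2 M perp_matrix)) v"
  unfolding point_map_def perp_eq_app2 app2_app2 ..

lemma point_map_nonzero: "invertible2 M \<Longrightarrow> v \<noteq> (\<lambda>_. 0) \<Longrightarrow> point_map M v \<noteq> (\<lambda>_. 0)"
  unfolding point_map_def perp_eq_0_iff by (intro app2_invertible_nonzero) (auto simp: perp_eq_0_iff)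

lemma point_map_zero: "point_map M (\<lambda>_. 0) = (\<lambda>_. 0)"
  by (simp add: point_map_def perp_def app2_def fun_eq_iff)

lemma point_map_surj:
  assumes "invertible2 M" obtains v where "point_map M v = u"
proof -
  obtain N where N: "\<forall>\<alpha>. app2 N (app2 M \<alpha>) = \<alpha> \<and> app2 M (app2 N \<alpha>) = \<alpha>"
    using assms(1) unfolding invertible2_def by blast
  have "point_map M (perp (app2 N (perp u))) = u"
    unfolding point_map_def perp_perp app2_uminus perp_uminus using N by (simp add: perp_perp)
  then show ?thesis using that by blast
qed


section \<open>Decomposed tensors\<close>

text \<open>With \<open>\<alpha>\<close> spanning \<open>\<ell>\<^sup>0\<close>, this is the tensor with \<open>g\<^sub>r \<ell>\<^sup>0\<close> in the slots \<open>r \<in> S\<close> and \<open>\<Gamma>\<^sub>j\<close> elsewhere.\<close>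
definition decomposed_tensor :: "((nat \<Rightarrow> bool) \<Rightarrow> complex) \<Rightarrow> (nat \<Rightarrow> bool \<Rightarrow> bool \<Rightarrow> complex) \<Rightarrow> nat set
   \<Rightarrow> (bool \<Rightarrow> complex) \<Rightarrow> (nat \<Rightarrow> bool) \<Rightarrow> complex" where
  "decomposed_tensor \<gamma> M S \<alpha> = (\<lambda>x. \<gamma> x * (\<Prod>r\<in>S. app2 (M r) \<alpha> (x r)))"

lemma decomposed_tensor_upd_mem:
  assumes "finite S" "r \<in> S" "depends_on (A - S) \<gamma>"
  shows "decomposed_tensor \<gamma> M S \<alpha> (x(r:=b)) =
    app2 (M r) \<alpha> b * (\<gamma> x * (\<Prod>i\<in>S - {r}. app2 (M i) \<alpha> (x i)))"
proof -
  have "(\<Prod>i\<in>S. app2 (M i) \<alpha> ((x(r:=b)) i)) = app2 (M r) \<alpha> b * (\<Prod>i\<in>S - {r}. app2 (M i) \<alpha> ((x(r:=b)) i))"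
    using assms(1,2) by (simp add: prod.remove)
  also have "(\<Prod>i\<in>S - {r}. app2 (M i) \<alpha> ((x(r:=b)) i)) = (\<Prod>i\<in>S - {r}. app2 (M i) \<alpha> (x i))"
    by (rule prod.cong) auto
  finally show ?thesis
    using assms(2,3) unfolding decomposed_tensor_def depends_on_def by (simp add: algebra_simps)
qed

lemma decomposed_tensor_upd_nonmem:
  assumes "r \<notin> S"
  shows "decomposed_tensor \<gamma> M S \<alpha> (x(r:=b)) = \<gamma> (x(r:=b)) * (\<Prod>i\<in>S. app2 (M i) \<alpha> (x i))"
  unfolding decomposed_tensor_def by (rule arg_cong[where f="(*) _"], rule prod.cong) (use assms in auto)

definition nonvanishing_index :: "(nat \<Rightarrow> bool \<Rightarrow> bool \<Rightarrow> complex) \<Rightarrow> nat set \<Rightarrow> (bool \<Rightarrow> complex)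
    \<Rightarrow> (nat \<Rightarrow> bool) \<Rightarrow> nat \<Rightarrow> bool" where
  "nonvanishing_index M S \<alpha> y = (\<lambda>i. if i \<in> S then (SOME b. app2 (M i) \<alpha> b \<noteq> 0) else y i)"

lemma prod_nonvanishing_index_nonzero:
  assumes "finite S" "\<forall>r\<in>S. invertible2 (M r)" "\<alpha> \<noteq> (\<lambda>_. 0)"
  shows "(\<Prod>i\<in>S. app2 (M i) \<alpha> (nonvanishing_index M S \<alpha> y i)) \<noteq> 0"
proof -
  have "app2 (M i) \<alpha> (SOME b. app2 (M i) \<alpha> b \<noteq> 0) \<noteq> 0" if "i \<in> S" for i
  proof -
    have "\<exists>b. app2 (M i) \<alpha> b \<noteq> 0" using app2_invertible_nonzero assms(2,3) that by fastforce
    then show ?thesis by (rule someI_ex)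
  qed
  then show ?thesis using assms(1) by (simp add: prod_zero_iff nonvanishing_index_def)
qed

lemma gamma_contract_of_decomposed_tensor_contract:
  assumes "finite S" "r \<notin> S" "depends_on (A - S) \<gamma>" "\<forall>r\<in>S. invertible2 (M r)" "\<alpha> \<noteq> (\<lambda>_. 0)"
    and "\<And>x. contract r u (decomposed_tensor \<gamma> M S \<alpha>) x = 0"
  shows "contract r u \<gamma> y = 0"
proof -
  define x where "x = nonvanishing_index M S \<alpha> y"
  have "\<gamma> (x(r:=b)) = \<gamma> (y(r:=b))" for b
    using assms(3) unfolding depends_on_def x_def nonvanishing_index_def by auto
  then have "contract r u (decomposed_tensor \<gamma> M S \<alpha>) x =
      contract r u \<gamma> y * (\<Prod>i\<in>S. app2 (M i) \<alpha> (x i))"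
    by (simp add: contract_def decomposed_tensor_upd_nonmem[OF assms(2)] algebra_simps)
  then show ?thesis
    using assms(6) prod_nonvanishing_index_nonzero[OF assms(1,4,5)] unfolding x_def by simp
qed

lemma gamma_eq_0_of_decomposed_tensor_contract:
  assumes "finite S" "r \<notin> S" "depends_on (A - S) \<gamma>" "\<forall>r\<in>S. invertible2 (M r)"
    and "\<And>u. u \<noteq> (\<lambda>_. 0) \<Longrightarrow>
      \<exists>\<alpha>. \<alpha> \<noteq> (\<lambda>_. 0) \<and> (\<forall>x. contract r u (decomposed_tensor \<gamma> M S \<alpha>) x = 0)"
  shows "\<gamma> = (\<lambda>_. 0)"
proof
  fix y
  have "contract r u \<gamma> y = 0" if "u \<noteq> (\<lambda>_. 0)" for u
    using assms(5)[OF that] gamma_contract_of_decomposed_tensor_contract[OF assms(1-4)] by blast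
  from this[OF bool_vector_neq_0(1)] this[OF bool_vector_neq_0(2)]
  have "\<gamma> (y(r:=True)) = 0" "\<gamma> (y(r:=False)) = 0" by (simp_all add: contract_def)
  then show "\<gamma> y = 0" by (cases "y r") (simp_all add: fun_upd_idem)
qed

lemma contract_decomposed_tensor_mem:
  assumes "finite S" "r \<in> S" "depends_on (A - S) \<gamma>"
  shows "contract r (perp (app2 (M r) \<alpha>)) (decomposed_tensor \<gamma> M S \<alpha>) x = 0"
  by (simp add: contract_def decomposed_tensor_upd_mem[OF assms] perp_def algebra_simps)

text \<open>Contracting slot \<open>j\<close> of the decomposed tensor at \<open>\<alpha> = perp v\<close> with \<open>v\<close> itself gives
  \<open>\<langle>v, M j (perp v)\<rangle> = 0\<close> for all \<open>v\<close>, so \<open>M j\<close> is a multiple of the identity.\<close>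
lemma proj_identity_of_contract_perp:
  assumes "finite S" "j \<in> S" "depends_on (A - S) \<gamma>" "\<gamma> \<noteq> (\<lambda>_. 0)" "\<forall>r\<in>S. invertible2 (M r)"
    and c: "\<And>v x. v \<noteq> (\<lambda>_. 0) \<Longrightarrow> contract j v (decomposed_tensor \<gamma> M S (perp v)) x = 0"
  shows "proj_identity (M j)"
proof -
  obtain y where y: "\<gamma> y \<noteq> 0" using assms(4) by auto
  have rel: "v True * app2 (M j) (perp v) True + v False * app2 (M j) (perp v) False = 0"
    if v: "v \<noteq> (\<lambda>_. 0)" for v
  proof -
    define \<alpha> where "\<alpha> = perp v"
    have "\<alpha> \<noteq> (\<lambda>_. 0)" unfolding \<alpha>_def using v perp_eq_0_iff by blast
    define x where "x = nonvanishing_index M (S - {j}) \<alpha> y"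
    define \<Pi> where "\<Pi> = (\<Prod>i\<in>S - {j}. app2 (M i) \<alpha> (x i))"
    have "\<Pi> \<noteq> 0" unfolding \<Pi>_def x_def
      using prod_nonvanishing_index_nonzero[of "S - {j}" M \<alpha>] assms(1,5) \<open>\<alpha> \<noteq> (\<lambda>_. 0)\<close> by simp
    have "\<gamma> x = \<gamma> y" using assms(2,3) unfolding depends_on_def x_def nonvanishing_index_def by auto
    then have "contract j v (decomposed_tensor \<gamma> M S \<alpha>) x =
        (v True * app2 (M j) \<alpha> True + v False * app2 (M j) \<alpha> False) * (\<gamma> y * \<Pi>)"
      unfolding \<Pi>_def by (intro contract_slot_product) (simp add: decomposed_tensor_upd_mem[OF assms(1-3)])
    then show ?thesis using c[OF v] \<open>\<Pi> \<noteq> 0\<close> y unfolding \<alpha>_def by simp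
  qed
  let ?M = "M j"
  have off_diag: "?M True False = 0" "?M False True = 0"
    using rel[OF bool_vector_neq_0(1)] rel[OF bool_vector_neq_0(2)] by (simp_all add: app2_def perp_def)
  have diag: "?M True True = ?M False False"
    using rel[OF bool_vector_neq_0(3)] off_diag by (simp add: app2_def perp_def)
  have app: "app2 ?M \<alpha> = (\<lambda>b. ?M True True * \<alpha> b)" for \<alpha>
  proof
    fix b show "app2 ?M \<alpha> b = ?M True True * \<alpha> b" using off_diag diag by (cases b) (simp_all add: app2_def)
  qed
  have "?M True True \<noteq> 0"
    using app2_invertible_nonzero[OF _ bool_vector_neq_0(1)] assms(2,5) app by force
  then show ?thesis unfolding proj_identity_def using app by blast
qed

lemma cline_decomposed_tensor_of_linear_factorization:
  assumes "finite S" "\<And>r b. r \<in> S \<Longrightarrow> degree (L r b) \<le> 1" "\<And>x. degree (s x) = 0"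
    and M: "\<And>r b c. M r b c = (if c then coeff (L r b) 0 else - coeff (L r b) 1)"
    and \<gamma>: "\<And>x. \<gamma> x = coeff (s x) 0"
    and T: "\<And>x. T x = homog (card S) ((\<Prod>r\<in>S. L r (x r)) * s x) v"
    and v: "v \<noteq> (\<lambda>_. 0)" and \<alpha>: "\<alpha> \<noteq> (\<lambda>_. 0)" "\<alpha> \<in> ann v"
  shows "cline T = cline (decomposed_tensor \<gamma> M S \<alpha>)"
proof -
  obtain c where c: "c \<noteq> 0" "\<alpha> = (\<lambda>b. c * perp v b)" by (rule ann_eq_multiple_perp[OF v \<alpha>(2,1)])
  have app: "app2 (M r) \<alpha> b = c * homog 1 (L r b) v" for r b
    unfolding c(2) app2_def perp_def M by (simp add: homog_degree_1 algebra_simps)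
  have "T x = (\<Prod>r\<in>S. homog 1 (L r (x r)) v) * \<gamma> x" for x
    unfolding T \<gamma> by (rule homog_prod_linear) (use assms(1-3) in auto)
  then have "decomposed_tensor \<gamma> M S \<alpha> = (\<lambda>x. c ^ card S * T x)"
    by (simp add: fun_eq_iff decomposed_tensor_def app prod.distrib)
  then show ?thesis using cline_scale[of "c ^ card S" T] c(1) by simp
qed

section \<open>The factorization curves as families of binary forms\<close>

definition hbasis :: "nat \<Rightarrow> nat \<Rightarrow> complex" where
  "hbasis i = (\<lambda>k. if k = i then 1 else 0)"

lemma psi_of_in_hspace: "psi_of m e F v \<in> hspace m"
  by (simp add: psi_of_def hspace_def)

lemma psi_of_expand: "psi_of m e F v = (\<lambda>k. \<Sum>i<Suc m. bform e (F i) v * hbasis i k)"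
proof
  fix k
  have "(\<Sum>i<Suc m. bform e (F i) v * hbasis i k) = (\<Sum>i<Suc m. if i = k then bform e (F k) v else 0)"
    by (intro sum.cong) (auto simp: hbasis_def)
  then show "psi_of m e F v k = (\<Sum>i<Suc m. bform e (F i) v * hbasis i k)"
    by (simp add: psi_of_def)
qed

lemma psi_of_nonzero:
  assumes "fcurve m \<phi> i e F" "v \<noteq> (\<lambda>_. 0)"
  shows "psi_of m e F v \<noteq> (\<lambda>_. 0)"
  using assms unfolding fcurve_def psi_of_def by (metis (mono_tags, lifting))

lemma curve_image_same_point:
  assumes "curve_image m ea Fa = curve_image m eb Fb" "u \<noteq> (\<lambda>_. 0)"
  obtains v where "v \<noteq> (\<lambda>_. 0)" "cline (psi_of m ea Fa u) = cline (psi_of m eb Fb v)"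
proof -
  have "cline (psi_of m ea Fa u) \<in> curve_image m eb Fb" using assms unfolding curve_image_def by blast
  then show ?thesis using that unfolding curve_image_def by blast
qed

context
  fixes m :: nat and \<phi> :: "(nat \<Rightarrow> complex) \<Rightarrow> ((nat \<Rightarrow> bool) \<Rightarrow> complex)"
  assumes fs: "factorization_structure m \<phi>"
begin

lemma phi_add: "x \<in> hspace m \<Longrightarrow> y \<in> hspace m \<Longrightarrow> \<phi> (\<lambda>i. x i + y i) = (\<lambda>t. \<phi> x t + \<phi> y t)"
  and phi_scale: "x \<in> hspace m \<Longrightarrow> \<phi> (\<lambda>i. c * x i) = (\<lambda>t. c * \<phi> x t)"
  and phi_in_tensor_space: "x \<in> hspace m \<Longrightarrow> \<phi> x \<in> tensor_space {1..m}"
  and inj_on_phi: "inj_on \<phi> (hspace m)"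
  using fs unfolding factorization_structure_def by blast+

lemma zero_in_hspace: "(\<lambda>_. 0) \<in> hspace m"
  by (simp add: hspace_def)

lemma phi_zero: "\<phi> (\<lambda>_. 0) = (\<lambda>_. 0)"
  using phi_scale[OF zero_in_hspace, of 0] by simp

lemma phi_nonzero: "x \<in> hspace m \<Longrightarrow> x \<noteq> (\<lambda>_. 0) \<Longrightarrow> \<phi> x \<noteq> (\<lambda>_. 0)"
  using inj_on_phi zero_in_hspace phi_zero unfolding inj_on_def by metis

lemma phi_sum_hbasis:
  "n \<le> Suc m \<Longrightarrow> \<phi> (\<lambda>k. \<Sum>i<n. c i * hbasis i k) = (\<lambda>t. \<Sum>i<n. c i * \<phi> (hbasis i) t)"
proof (induction n)
  case 0 then show ?case using phi_zero by simp
next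
  case (Suc n)
  have h1: "(\<lambda>k. \<Sum>i<n. c i * hbasis i k) \<in> hspace m" and h2: "hbasis n \<in> hspace m"
    using Suc.prems by (auto simp: hspace_def hbasis_def)
  then have "\<phi> (\<lambda>k. (\<Sum>i<n. c i * hbasis i k) + c n * hbasis n k) =
      (\<lambda>t. \<phi> (\<lambda>k. \<Sum>i<n. c i * hbasis i k) t + c n * \<phi> (hbasis n) t)"
    using phi_add[OF h1, of "\<lambda>k. c n * hbasis n k"] phi_scale[OF h2] by (simp add: hspace_def)
  then show ?case using Suc by simp
qed

lemma phi_psi_of_nonzero:
  "fcurve m \<phi> i e F \<Longrightarrow> v \<noteq> (\<lambda>_. 0) \<Longrightarrow> \<phi> (psi_of m e F v) \<noteq> (\<lambda>_. 0)"
  using phi_nonzero[OF psi_of_in_hspace psi_of_nonzero] .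

lemma depends_on_phi_psi_of: "depends_on {1..m} (\<phi> (psi_of m e F v))"
  by (rule depends_on_tensor_space[OF phi_in_tensor_space[OF psi_of_in_hspace]])

lemma phi_psi_of_poly:
  shows "\<exists>P. (\<forall>x. degree (P x) \<le> e) \<and> (\<forall>x y. (\<forall>k\<in>{1..m}. x k = y k) \<longrightarrow> P x = P y) \<and>
    (\<forall>v x. \<phi> (psi_of m e F v) x = homog e (P x) v)"
proof -
  define P where "P x = (\<Sum>i<Suc m. smult (\<phi> (hbasis i) x) (poly_of_coeffs e (F i)))" for x
  have "degree (P x) \<le> e" for x
    unfolding P_def
    by (rule degree_sum_le) (auto intro: order.trans[OF degree_smult_le] simp: degree_poly_of_coeffs)
  moreover have "P x = P y" if "\<forall>k\<in>{1..m}. x k = y k" for x y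
  proof -
    have "\<phi> (hbasis i) x = \<phi> (hbasis i) y" if "i < Suc m" for i
    proof -
      have "hbasis i \<in> hspace m" using that by (auto simp: hspace_def hbasis_def)
      then have "depends_on {1..m} (\<phi> (hbasis i))"
        using phi_in_tensor_space depends_on_tensor_space by blast
      then show ?thesis using \<open>\<forall>k\<in>{1..m}. x k = y k\<close> unfolding depends_on_def by blast
    qed
    then show ?thesis unfolding P_def by (intro sum.cong) auto
  qed
  moreover have "\<phi> (psi_of m e F v) x = homog e (P x) v" for v x
  proof -
    have "\<phi> (psi_of m e F v) = (\<lambda>t. \<Sum>i<Suc m. bform e (F i) v * \<phi> (hbasis i) t)"
      unfolding psi_of_expand by (rule phi_sum_hbasis) simp
    then show ?thesis
      unfolding P_def homog_sum[OF finite_lessThan] by (simp add: homog_smult homog_poly_of_coeffs algebra_simps)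
  qed
  ultimately show ?thesis by blast
qed

text \<open>Since \<open>\<phi>(\<psi>\<^sub>r(u)) \<in> \<Sigma>\<^sup>0\<^sub>r\<^sub>,\<^sub>u\<close> for generic \<open>u\<close>, and the contraction is a form in \<open>u\<close>,
  the contraction vanishes for all \<open>u\<close>.\<close>
lemma contract_phi_psi_of:
  assumes fc: "fcurve m \<phi> r e F" and r: "r \<in> {1..m}"
  shows "contract r u (\<phi> (psi_of m e F u)) x = 0"
proof -
  obtain U where U: "zariski_open_P1 U" "U \<noteq> {}"
    "\<forall>v\<in>U. {x \<in> hspace m. \<phi> x \<in> Sigma0 m r v} = cline (psi_of m e F v)"
    using fc unfolding fcurve_def generic_P1_def by blast
  obtain P where P: "\<And>x. degree (P x) \<le> e" "\<And>v x. \<phi> (psi_of m e F v) x = homog e (P x) v"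
    using phi_psi_of_poly by blast
  define G where "G = [:0,1:] * P (x(r:=True)) + [:1:] * P (x(r:=False))"
  have d1: "degree ([:0,1:] * p) \<le> 1 + e" if "degree p \<le> e" for p :: "complex poly"
    using degree_mult_le[of "[:0,1:]" p] that by simp
  have dG: "degree G \<le> 1 + e" unfolding G_def
    by (rule degree_add_le) (use d1 P(1) in \<open>auto intro: le_SucI\<close>)
  have homG: "homog (1 + e) G v = contract r v (\<phi> (psi_of m e F v)) x" for v
  proof -
    have "homog (1 + e) G v = homog 1 [:0,1:] v * homog e (P (x(r:=True))) v
        + homog 1 [:1:] v * homog e (P (x(r:=False))) v"
      unfolding G_def homog_add by (subst homog_mult, simp, use P(1) in simp)+ simp
    then show ?thesis by (simp add: homog_degree_1 contract_def P(2))
  qed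
  have "\<phi> (psi_of m e F v) \<in> Sigma0 m r v" if "v \<in> U" for v
    using U(3) that cline_self by blast
  then have "\<forall>v\<in>U. homog (1 + e) G v = 0" unfolding homG using contract_Sigma0[OF r] by blast
  then have "G = 0" using poly_eq_0_of_homog_vanishing_on_open[OF U(1,2) dG] by blast
  then show ?thesis using homG[of u] by simp
qed


lemma phi_psi_of_proportional:
  assumes "fcurve m \<phi> a ea Fa" "u \<noteq> (\<lambda>_. 0)"
    and "cline (psi_of m ea Fa u) = cline (psi_of m eb Fb v)"
  obtains c where "c \<noteq> 0" "\<phi> (psi_of m ea Fa u) = (\<lambda>t. c * \<phi> (psi_of m eb Fb v) t)"
proof -
  obtain c where c: "psi_of m ea Fa u = (\<lambda>i. c * psi_of m eb Fb v i)"
    using cline_eq_imp_multiple[OF assms(3)] by blast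
  then have "c \<noteq> 0" using psi_of_nonzero[OF assms(1,2)] by auto
  moreover have "\<phi> (psi_of m ea Fa u) = (\<lambda>t. c * \<phi> (psi_of m eb Fb v) t)"
    unfolding c by (rule phi_scale[OF psi_of_in_hspace])
  ultimately show ?thesis using that by blast
qed

lemma contract_phi_psi_of_same_point:
  assumes "r \<in> {1..m}" "fcurve m \<phi> r er Fr" "u \<noteq> (\<lambda>_. 0)"
    and "cline (psi_of m er Fr u) = cline (psi_of m ea Fa v)"
  shows "contract r u (\<phi> (psi_of m ea Fa v)) x = 0"
proof -
  obtain c where c: "c \<noteq> 0" "\<phi> (psi_of m er Fr u) = (\<lambda>t. c * \<phi> (psi_of m ea Fa v) t)"
    by (rule phi_psi_of_proportional[OF assms(2-4)])
  have "0 = contract r u (\<phi> (psi_of m er Fr u)) x" using contract_phi_psi_of[OF assms(2,1)] by simp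
  also have "\<dots> = c * contract r u (\<phi> (psi_of m ea Fa v)) x" unfolding c(2) by (rule contract_scale)
  finally show ?thesis using c(1) by simp
qed

text \<open>A curve whose tensors lie in \<open>\<Sigma>\<^sup>0\<close> of slot \<open>r\<close> along an invertible reparametrization
  \<open>A\<close> agrees pointwise with \<open>\<psi>\<^sub>r \<circ> A\<close>: they agree on a Zariski open set, and the \<open>2\<times>2\<close> minors of
  the two coordinate vectors are forms.\<close>
lemma psi_of_reparametrization:
  assumes r: "r \<in> {1..m}" "fcurve m \<phi> r er Fr" and a: "fcurve m \<phi> a ea Fa"
    and A_nonzero: "\<And>v. v \<noteq> (\<lambda>_. 0) \<Longrightarrow> app2 A v \<noteq> (\<lambda>_. 0)" and A_surj: "surj (app2 A)"
    and in_Sigma0: "\<And>v. v \<noteq> (\<lambda>_. 0) \<Longrightarrow> \<phi> (psi_of m ea Fa v) \<in> Sigma0 m r (app2 A v)"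
    and v: "v \<noteq> (\<lambda>_. 0)"
  shows "cline (psi_of m ea Fa v) = cline (psi_of m er Fr (app2 A v))"
proof -
  obtain U where U: "zariski_open_P1 U" "U \<noteq> {}"
    "\<forall>u\<in>U. {x \<in> hspace m. \<phi> x \<in> Sigma0 m r u} = cline (psi_of m er Fr u)"
    using r(2) unfolding fcurve_def generic_P1_def by blast
  obtain F0 N' where F0: "F0 \<noteq> 0" "degree F0 \<le> N'"
      "\<And>u. u \<noteq> (\<lambda>_. 0) \<Longrightarrow> homog N' F0 u \<noteq> 0 \<Longrightarrow> u \<in> U"
    using zariski_open_P1_contains_nonvanishing_locus[OF U(1,2)] by blast
  obtain F1 where F1: "degree F1 \<le> N'" "\<And>v. homog N' F0 (app2 A v) = homog N' F1 v"
    using homog_comp_app2[OF F0(2)] by blast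
  have "F1 \<noteq> 0"
  proof
    assume "F1 = 0"
    obtain u0 where u0: "homog N' F0 u0 \<noteq> 0" using homog_eq_0_iff[OF F0(2)] F0(1) by blast
    obtain w where "u0 = app2 A w" using surjD[OF A_surj] by blast
    then show False using u0 F1(2)[of w] \<open>F1 = 0\<close> by simp
  qed
  have "\<forall>i. \<exists>Q. degree Q \<le> er \<and> (\<forall>v. homog er (poly_of_coeffs er (Fr i)) (app2 A v) = homog er Q v)"
    using homog_comp_app2[OF degree_poly_of_coeffs] by blast
  from choice[OF this] obtain Q where Q: "\<forall>i. degree (Q i) \<le> er \<and>
      (\<forall>v. homog er (poly_of_coeffs er (Fr i)) (app2 A v) = homog er (Q i) v)"
    by blast
  define Pa where "Pa i = (if i \<le> m then poly_of_coeffs ea (Fa i) else 0)" for i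
  define Pr where "Pr i = (if i \<le> m then Q i else 0)" for i
  have deg: "degree (Pa i) \<le> ea" "degree (Pr i) \<le> er" for i
    using Q by (simp_all add: Pa_def Pr_def degree_poly_of_coeffs)
  have coords: "psi_of m ea Fa w = (\<lambda>i. homog ea (Pa i) w)"
    "psi_of m er Fr (app2 A w) = (\<lambda>i. homog er (Pr i) w)" for w
    using Q by (simp_all add: fun_eq_iff psi_of_def Pa_def Pr_def homog_poly_of_coeffs[symmetric])
  have "\<exists>c. \<forall>i. homog ea (Pa i) w = c * homog er (Pr i) w"
    if w: "w \<noteq> (\<lambda>_. 0)" "homog N' F1 w \<noteq> 0" for w
  proof -
    have "app2 A w \<in> U" using F0(3)[OF A_nonzero[OF w(1)]] w(2) F1(2)[of w] by simp
    moreover have "psi_of m ea Fa w \<in> {x \<in> hspace m. \<phi> x \<in> Sigma0 m r (app2 A w)}"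
      using psi_of_in_hspace in_Sigma0[OF w(1)] by blast
    ultimately obtain c where "psi_of m ea Fa w = (\<lambda>i. c * psi_of m er Fr (app2 A w) i)"
      using U(3) unfolding cline_def by blast
    then show ?thesis unfolding coords by (intro exI[of _ c]) (simp add: fun_eq_iff)
  qed
  then have "psi_of m ea Fa v i * psi_of m er Fr (app2 A v) k =
      psi_of m ea Fa v k * psi_of m er Fr (app2 A v) i" for i k
    unfolding coords using homog_minors_vanish[where P=Pa and Q=Pr, OF deg \<open>F1 \<noteq> 0\<close> F1(1)] by blast
  then show ?thesis
    by (rule cline_eq_of_proportional[OF psi_of_nonzero[OF r(2) A_nonzero[OF v]] psi_of_nonzero[OF a v]])
qed

end


section \<open>Decomposable factorization curves\<close>

context
  fixes m j :: nat and \<phi> :: "(nat \<Rightarrow> complex) \<Rightarrow> ((nat \<Rightarrow> bool) \<Rightarrow> complex)"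
    and e :: "nat \<Rightarrow> nat" and F :: "nat \<Rightarrow> nat \<Rightarrow> nat \<Rightarrow> complex"
  assumes fs: "factorization_structure m \<phi>" and j: "j \<in> {1..m}"
    and fc: "\<forall>i\<in>{1..m}. fcurve m \<phi> i (e i) (F i)"
begin

lemma fcurve_at: "i \<in> {1..m} \<Longrightarrow> fcurve m \<phi> i (e i) (F i)"
  using fc by blast

lemma same_image_contract_at_point:
  assumes "r \<in> {1..m}" "curve_image m (e r) (F r) = curve_image m (e j) (F j)" "u \<noteq> (\<lambda>_. 0)"
  shows "\<exists>v. v \<noteq> (\<lambda>_. 0) \<and> (\<forall>x. contract r u (\<phi> (psi_of m (e j) (F j) v)) x = 0)"
proof -
  obtain v where "v \<noteq> (\<lambda>_. 0)" "cline (psi_of m (e r) (F r) u) = cline (psi_of m (e j) (F j) v)"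
    using curve_image_same_point[OF assms(2,3)] by blast
  then show ?thesis
    using contract_phi_psi_of_same_point[OF fs assms(1) fcurve_at[OF assms(1)] assms(3)] by blast
qed

lemma same_image_contract_of_point:
  assumes "r \<in> {1..m}" "curve_image m (e r) (F r) = curve_image m (e j) (F j)" "v \<noteq> (\<lambda>_. 0)"
  shows "\<exists>u. u \<noteq> (\<lambda>_. 0) \<and> (\<forall>x. contract r u (\<phi> (psi_of m (e j) (F j) v)) x = 0)"
proof -
  obtain u where "u \<noteq> (\<lambda>_. 0)" "cline (psi_of m (e j) (F j) v) = cline (psi_of m (e r) (F r) u)"
    using curve_image_same_point[OF assms(2)[symmetric] assms(3)] by blast
  moreover from this have "contract r u (\<phi> (psi_of m (e j) (F j) v)) x = 0" for x
    using contract_phi_psi_of_same_point[OF fs assms(1) fcurve_at[OF assms(1)]] by simp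
  ultimately show ?thesis by blast
qed

context
  fixes S M \<gamma>
  assumes dd: "decomposition_data m \<phi> e F j S M \<gamma>"
begin

lemma decomposition_data_facts:
  "S \<subseteq> {1..m}" "card S = e j" "\<gamma> \<noteq> (\<lambda>_. 0)" "\<forall>r\<in>S. invertible2 (M r)"
  "finite S" "depends_on ({1..m} - S) \<gamma>"
proof -
  show S: "S \<subseteq> {1..m}" "card S = e j" "\<gamma> \<noteq> (\<lambda>_. 0)" "\<forall>r\<in>S. invertible2 (M r)"
    using dd unfolding decomposition_data_def by simp_all
  show "finite S" using S(1) finite_subset by blast
  show "depends_on ({1..m} - S) \<gamma>"
    using dd depends_on_tensor_space unfolding decomposition_data_def by simp
qed

lemma phi_psi_j_decomposed:
  assumes v: "v \<noteq> (\<lambda>_. 0)"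
  obtains c where "c \<noteq> 0" "\<phi> (psi_of m (e j) (F j) v) = (\<lambda>x. c * decomposed_tensor \<gamma> M S (perp v) x)"
proof -
  have "cline (\<phi> (psi_of m (e j) (F j) v)) = cline (decomposed_tensor \<gamma> M S (perp v))"
    using dd v perp_eq_0_iff perp_in_ann unfolding decomposition_data_def decomposed_tensor_def by blast
  then obtain c where c: "\<phi> (psi_of m (e j) (F j) v) = (\<lambda>x. c * decomposed_tensor \<gamma> M S (perp v) x)"
    by (rule cline_eq_imp_multiple)
  then have "c \<noteq> 0" using phi_psi_of_nonzero[OF fs fcurve_at[OF j] v] by auto
  then show ?thesis using that c by blast
qed

lemma contract_decomposed_tensor_of_contract_phi_psi_j:
  assumes "v \<noteq> (\<lambda>_. 0)" "contract r u (\<phi> (psi_of m (e j) (F j) v)) x = 0"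
  shows "contract r u (decomposed_tensor \<gamma> M S (perp v)) x = 0"
proof -
  obtain c where c: "c \<noteq> 0" "\<phi> (psi_of m (e j) (F j) v) = (\<lambda>x. c * decomposed_tensor \<gamma> M S (perp v) x)"
    by (rule phi_psi_j_decomposed[OF assms(1)])
  have "c * contract r u (decomposed_tensor \<gamma> M S (perp v)) x = 0"
    using assms(2) unfolding c(2) contract_scale .
  then show ?thesis using c(1) by simp
qed

lemma mem_decomposition_set_of_same_image:
  assumes r: "r \<in> {1..m}" and "curve_image m (e r) (F r) = curve_image m (e j) (F j)"
  shows "r \<in> S"
proof (rule ccontr)
  assume "r \<notin> S"
  have "\<exists>\<alpha>. \<alpha> \<noteq> (\<lambda>_. 0) \<and> (\<forall>x. contract r u (decomposed_tensor \<gamma> M S \<alpha>) x = 0)"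
    if u: "u \<noteq> (\<lambda>_. 0)" for u
  proof -
    obtain v where "v \<noteq> (\<lambda>_. 0)" "\<forall>x. contract r u (\<phi> (psi_of m (e j) (F j) v)) x = 0"
      using same_image_contract_at_point[OF r assms(2) u] by blast
    then show ?thesis
      using contract_decomposed_tensor_of_contract_phi_psi_j perp_eq_0_iff by blast
  qed
  then have "\<gamma> = (\<lambda>_. 0)"
    using gamma_eq_0_of_decomposed_tensor_contract[OF decomposition_data_facts(5) \<open>r \<notin> S\<close>
        decomposition_data_facts(6,4)] by blast
  then show False using decomposition_data_facts(3) by simp
qed

lemma contract_decomposed_tensor_j:
  "v \<noteq> (\<lambda>_. 0) \<Longrightarrow> contract j v (decomposed_tensor \<gamma> M S (perp v)) x = 0"
  using contract_decomposed_tensor_of_contract_phi_psi_j contract_phi_psi_of[OF fs fcurve_at[OF j] j] by blast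

lemma j_mem_decomposition_set: "j \<in> S"
  using mem_decomposition_set_of_same_image[OF j] by blast

lemma proj_identity_at_j: "proj_identity (M j)"
  by (rule proj_identity_of_contract_perp[OF decomposition_data_facts(5) j_mem_decomposition_set
        decomposition_data_facts(6,3,4) contract_decomposed_tensor_j])

lemma phi_psi_j_in_Sigma0:
  assumes r: "r \<in> S" and v: "v \<noteq> (\<lambda>_. 0)"
  shows "\<phi> (psi_of m (e j) (F j) v) \<in> Sigma0 m r (point_map (M r) v)"
proof (rule Sigma0_of_contract[OF _ depends_on_phi_psi_of[OF fs]])
  show "r \<in> {1..m}" using r decomposition_data_facts(1) by blast
  obtain c where c: "\<phi> (psi_of m (e j) (F j) v) = (\<lambda>x. c * decomposed_tensor \<gamma> M S (perp v) x)"
    by (rule phi_psi_j_decomposed[OF v])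
  show "contract r (point_map (M r) v) (\<phi> (psi_of m (e j) (F j) v)) x = 0" for x
    unfolding c contract_scale point_map_def
    using contract_decomposed_tensor_mem[OF decomposition_data_facts(5) r decomposition_data_facts(6)] by simp
qed

lemma same_image_of_mem_decomposition_set:
  assumes rS: "r \<in> S"
  shows "curve_image m (e r) (F r) = curve_image m (e j) (F j)"
proof -
  have r: "r \<in> {1..m}" and inv: "invertible2 (M r)" using rS decomposition_data_facts(1,4) by auto
  define A where "A = mat_mult2 perp_matrix (mat_mult2 (M r) perp_matrix)"
  have A: "point_map (M r) v = app2 A v" for v unfolding A_def by (rule point_map_eq_app2)
  have "surj (app2 A)"
    unfolding surj_def
  proof
    fix u
    obtain v where "point_map (M r) v = u" by (rule point_map_surj[OF inv])
    then show "\<exists>v. u = app2 A v" using A by metis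
  qed
  have cl: "cline (psi_of m (e j) (F j) v) = cline (psi_of m (e r) (F r) (point_map (M r) v))"
    if v: "v \<noteq> (\<lambda>_. 0)" for v
    unfolding A
    by (rule psi_of_reparametrization[OF fs r fcurve_at[OF r] fcurve_at[OF j] _ \<open>surj (app2 A)\<close> _ v])
      (use point_map_nonzero[OF inv] phi_psi_j_in_Sigma0[OF rS] in \<open>simp_all add: A[symmetric]\<close>)
  show ?thesis
  proof
    show "curve_image m (e r) (F r) \<subseteq> curve_image m (e j) (F j)"
    proof
      fix X assume "X \<in> curve_image m (e r) (F r)"
      then obtain u where u: "u \<noteq> (\<lambda>_. 0)" "X = cline (psi_of m (e r) (F r) u)"
        unfolding curve_image_def by blast
      obtain v where v: "point_map (M r) v = u" by (rule point_map_surj[OF inv])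
      then have "v \<noteq> (\<lambda>_. 0)" using u(1) point_map_zero by auto
      then show "X \<in> curve_image m (e j) (F j)" using cl u v unfolding curve_image_def by auto
    qed
    show "curve_image m (e j) (F j) \<subseteq> curve_image m (e r) (F r)"
    proof
      fix X assume "X \<in> curve_image m (e j) (F j)"
      then obtain v where v: "v \<noteq> (\<lambda>_. 0)" "X = cline (psi_of m (e j) (F j) v)"
        unfolding curve_image_def by blast
      then show "X \<in> curve_image m (e r) (F r)"
        using cl[OF v(1)] point_map_nonzero[OF inv v(1)] unfolding curve_image_def by blast
    qed
  qed
qed

lemma decomposable_of_decomposition_data: "decomposable m e F j"
proof -
  have "{i \<in> {1..m}. curve_image m (e i) (F i) = curve_image m (e j) (F j)} = S"
    using mem_decomposition_set_of_same_image same_image_of_mem_decomposition_set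
      decomposition_data_facts(1) by blast
  then show ?thesis unfolding decomposable_def using decomposition_data_facts(2) by simp
qed

end

lemma decomposition_data_of_decomposable:
  assumes "decomposable m e F j"
  shows "\<exists>S M \<gamma>. decomposition_data m \<phi> e F j S M \<gamma>"
proof -
  define S where "S = {i \<in> {1..m}. curve_image m (e i) (F i) = curve_image m (e j) (F j)}"
  have S: "S \<subseteq> {1..m}" "card S = e j" "finite S"
    using assms finite_subset unfolding decomposable_def S_def by auto
  obtain P where P: "\<forall>x. degree (P x) \<le> e j" "\<forall>x y. (\<forall>k\<in>{1..m}. x k = y k) \<longrightarrow> P x = P y"
      "\<forall>v x. \<phi> (psi_of m (e j) (F j) v) x = homog (e j) (P x) v"
    using phi_psi_of_poly[OF fs, where e="e j" and F="F j"] by blast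
  have phi_eq: "\<phi> (psi_of m (e j) (F j) v) = (\<lambda>x. homog (e j) (P x) v)" for v
    by (simp add: fun_eq_iff P(3))
  have "\<exists>x. homog (e j) (P x) v \<noteq> 0" if v: "v \<noteq> (\<lambda>_. 0)" for v
  proof -
    obtain x where "\<phi> (psi_of m (e j) (F j) v) x \<noteq> 0"
      using phi_psi_of_nonzero[OF fs fcurve_at[OF j] v] by auto
    then show ?thesis using P(3) by auto
  qed
  moreover have "\<exists>u. u \<noteq> (\<lambda>_. 0) \<and> (\<forall>x. contract r u (\<lambda>x. homog (e j) (P x) v) x = 0)"
    if "r \<in> S" "v \<noteq> (\<lambda>_. 0)" for r v
  proof -
    have "r \<in> {1..m}" "curve_image m (e r) (F r) = curve_image m (e j) (F j)"
      using that(1) unfolding S_def by auto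
    from same_image_contract_of_point[OF this that(2)] show ?thesis unfolding phi_eq .
  qed
  moreover have "\<exists>v. v \<noteq> (\<lambda>_. 0) \<and> (\<forall>x. contract r u (\<lambda>x. homog (e j) (P x) v) x = 0)"
    if "r \<in> S" "u \<noteq> (\<lambda>_. 0)" for r u
  proof -
    have "r \<in> {1..m}" "curve_image m (e r) (F r) = curve_image m (e j) (F j)"
      using that(1) unfolding S_def by auto
    from same_image_contract_at_point[OF this that(2)] show ?thesis unfolding phi_eq .
  qed
  ultimately obtain L s where L: "\<And>r b. r \<in> S \<Longrightarrow> degree (L r b) \<le> 1"
      "\<And>r. r \<in> S \<Longrightarrow> coeff (L r True) 0 * coeff (L r False) 1 \<noteq> coeff (L r True) 1 * coeff (L r False) 0"
    and s: "\<And>x. degree (s x) = 0" "\<And>x y. \<forall>i\<in>{1..m} - S. x i = y i \<Longrightarrow> s x = s y"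
      "\<exists>x. s x \<noteq> 0" "\<And>x. P x = (\<Prod>r\<in>S. L r (x r)) * s x"
    using linear_factorization[OF S(3,2), of P "{1..m}"] P(1,2) by blast
  text \<open>The linear form \<open>L r\<close> evaluated at \<open>v\<close> is \<open>M r\<close> applied to \<open>perp v\<close>.\<close>
  define M where "M r b c = (if c then coeff (L r b) 0 else - coeff (L r b) 1)" for r b c
  define \<gamma> where "\<gamma> x = coeff (s x) 0" for x
  have "\<gamma> \<noteq> (\<lambda>_. 0)"
  proof -
    obtain x where "s x \<noteq> 0" using s(3) by blast
    then have "\<gamma> x \<noteq> 0" using s(1)[of x] leading_coeff_0_iff[of "s x"] unfolding \<gamma>_def by simp
    then show ?thesis by auto
  qed
  moreover have "depends_on ({1..m} - S) \<gamma>"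
    unfolding depends_on_def
  proof (intro allI impI)
    fix x y :: "nat \<Rightarrow> bool" assume "\<forall>i\<in>{1..m} - S. x i = y i"
    then show "\<gamma> x = \<gamma> y" unfolding \<gamma>_def by (simp only: s(2))
  qed
  then have "\<gamma> \<in> tensor_space ({1..m} - S)"
    using tensor_space_iff_depends_on[OF finite_Diff[OF finite_atLeastAtMost]] by blast
  moreover have "invertible2 (M r)" if "r \<in> S" for r
    using L(2)[OF that] by (intro invertible2_of_det) (simp add: M_def algebra_simps)
  moreover have "cline (\<phi> (psi_of m (e j) (F j) v)) = cline (\<lambda>x. \<gamma> x * (\<Prod>r\<in>S. app2 (M r) \<alpha> (x r)))"
    if "v \<noteq> (\<lambda>_. 0)" "\<alpha> \<noteq> (\<lambda>_. 0)" "\<alpha> \<in> ann v" for v \<alpha>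
  proof -
    have "\<phi> (psi_of m (e j) (F j) v) x = homog (card S) ((\<Prod>r\<in>S. L r (x r)) * s x) v" for x
      using P(3) s(4) S(2) by simp
    from cline_decomposed_tensor_of_linear_factorization[OF S(3) L(1) s(1) M_def \<gamma>_def this that]
    show ?thesis unfolding decomposed_tensor_def .
  qed
  ultimately have "decomposition_data m \<phi> e F j S M \<gamma>"
    unfolding decomposition_data_def using S by blast
  then show ?thesis by blast
qed

end

theorem theorem2p13:
  fixes m j :: nat
    and \<phi> :: "(nat \<Rightarrow> complex) \<Rightarrow> ((nat \<Rightarrow> bool) \<Rightarrow> complex)"
    and e :: "nat \<Rightarrow> nat"
    and F :: "nat \<Rightarrow> nat \<Rightarrow> nat \<Rightarrow> complex"
  assumes "factorization_structure m \<phi>"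
    and "j \<in> {1..m}"
    and "\<forall>i\<in>{1..m}. fcurve m \<phi> i (e i) (F i)"
  shows "(decomposable m e F j \<longleftrightarrow> (\<exists>S M \<gamma>. decomposition_data m \<phi> e F j S M \<gamma>)) \<and>
         (\<forall>S M \<gamma>. decomposition_data m \<phi> e F j S M \<gamma> \<longrightarrow> j \<in> S \<and> proj_identity (M j))"
  using decomposition_data_of_decomposable[OF assms] decomposable_of_decomposition_data[OF assms]
    j_mem_decomposition_set[OF assms] proj_identity_at_j[OF assms] by blast

end
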